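(* For every positive integer $p$ and every composition $I=(i_1,\dots,i_r)$, \[ L_p(q)\star_q L_I(q)=\sum_{K\preceq p\triangleright I}q^{\mathrm{st}(K,\,p\triangleright I)}\begin{bmatrix}m_K+p\\ p\end{bmatrix}_q\Psi_K, \] where $p\triangleright I=(p+i_1,i_2,\dots,i_r)$, $m_K=\#\{d\in\mathrm{Des}(K):d\ge p\}$, and $L_p(q)=L_{(p)}(q)$.
   Context: Compositions: positive integers with given sum $n$; $\mathrm{Des}(I)$ is the set of partial sums other than $n$; $K\preceq J$ iff $\mathrm{Des}(K)\supseteq\mathrm{Des}(J)$; $\mathrm{st}(K,J)=\#\{(a,b)\in\mathrm{Des}(K)\times\mathrm{Des}(J):a\ge b\}$. Over $\mathbb K(q)$ ($\mathrm{char}\,\mathbb K=0$): packed words are words with letter set $\{1,\dots,m\}$; $\mathrm{pack}$ replaces the $t$-th smallest letter by $t$. For a packed word $w$ of length $N$: $\mathrm{WC}(w)$ is the composition of $N$ whose descent set is the set of positions $p'<N$ with $w_{p'}$ not occurring later in $w$; $\mathrm{sinv}(w)=\#\{i<j:w_i>w_j,\ w_j\text{ not occurring in }w_{j+1}\cdots w_N\}$. $\mathbf{WQSym}$ has basis $\mathbf M_u$ with $\mathbf M_{u'}\mathbf M_{u''}=\sum\mathbf M_z$ over packed $z=x\cdot y$ with $\mathrm{pack}(x)=u'$, $\mathrm{pack}(y)=u''$; $\mathbf M_{u'}\star_q\mathbf M_{u''}=\sum q^{\mathrm{sinv}(z)-\mathrm{sinv}(u')-\mathrm{sinv}(u'')}\mathbf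 M_z$. $\mathbf{Sym}$ is the quotient by the span of $\mathbf M_z-\mathbf M_{z'}$ with $\mathrm{WC}(z)=\mathrm{WC}(z')$, $\zeta$ the quotient map, $\Psi_I=\zeta(\mathbf M_u)$ for $\mathrm{WC}(u)=I$ (a basis). Let $\sigma:\mathbf{Sym}\to\mathbf{WQSym}$ be linear with $\sigma(\Psi_I)=\mathbf M_{1^{i_1}2^{i_2}\cdots r^{i_r}}$, and define the (non-associative) product $f\star_q g=\zeta(\sigma(f)\star_q\sigma(g))$ on $\mathbf{Sym}$. $L_J(q)=\sum_{K\preceq J}q^{\mathrm{st}(K,J)}\Psi_K$. *)

theory Defs
  imports Main "HOL-Computational_Algebra.Polynomial" "HOL-Computational_Algebra.Fraction_Field"
begin

definition is_comp :: "nat list \<Rightarrow> bool" where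
  "is_comp I \<longleftrightarrow> (\<forall>x\<in>set I. 0 < x)"

definition Des :: "nat list \<Rightarrow> nat set" where
  "Des I = {sum_list (take k I) | k. 0 < k \<and> k < length I}"

definition comp_leq :: "nat list \<Rightarrow> nat list \<Rightarrow> bool" where
  "comp_leq K J \<longleftrightarrow> is_comp K \<and> is_comp J \<and> sum_list K = sum_list J \<and> Des J \<subseteq> Des K"

definition st :: "nat list \<Rightarrow> nat list \<Rightarrow> nat" where
  "st K J = card {(a, b). a \<in> Des K \<and> b \<in> Des J \<and> b \<le> a}"

text \<open>The composition of n with a given descent set S (subset of 1..n-1).\<close>
definition comp_from_des :: "nat \<Rightarrow> nat set \<Rightarrow> nat list" where
  "comp_from_des n S =
     (let l = sorted_list_of_set ((S \<union> {n}) \<inter> {0<..n}) in map2 (\<lambda>a b. a - b) l (0 # l))"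

definition packed :: "nat list \<Rightarrow> bool" where
  "packed w \<longleftrightarrow> set w = {1..card (set w)}"

definition pack :: "nat list \<Rightarrow> nat list" where
  "pack w = map (\<lambda>x. card {y \<in> set w. y \<le> x}) w"

definition WC :: "nat list \<Rightarrow> nat list" where
  "WC w = comp_from_des (length w)
     {p. 1 \<le> p \<and> p < length w \<and> w ! (p - 1) \<notin> set (drop p w)}"

definition sinv :: "nat list \<Rightarrow> nat" where
  "sinv w = card {(i, j). i < j \<and> j < length w \<and> w ! j < w ! i \<and> w ! j \<notin> set (drop (Suc j) w)}"

text \<open>An element of WQSym is a finitely supported function from packed words to coefficients
  (coefficient of M_u); an element of Sym a finitely supported function from compositions
  to coefficients (coefficient of Psi_I).\<close>

definition supp :: "('b \<Rightarrow> 'a::zero) \<Rightarrow> 'b set" where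
  "supp f = {x. f x \<noteq> 0}"

text \<open>Coefficient of M_z in M_u star_q M_v.\<close>
definition Mstar_coeff :: "'a::field \<Rightarrow> nat list \<Rightarrow> nat list \<Rightarrow> nat list \<Rightarrow> 'a" where
  "Mstar_coeff q u v z =
     (if packed z \<and> length z = length u + length v \<and>
         pack (take (length u) z) = u \<and> pack (drop (length u) z) = v
      then q powi (int (sinv z) - int (sinv u) - int (sinv v)) else 0)"

definition wq_star :: "'a::field \<Rightarrow> (nat list \<Rightarrow> 'a) \<Rightarrow> (nat list \<Rightarrow> 'a) \<Rightarrow> (nat list \<Rightarrow> 'a)" where
  "wq_star q F G = (\<lambda>z. \<Sum>u\<in>supp F. \<Sum>v\<in>supp G. F u * G v * Mstar_coeff q u v z)"

definition zeta :: "(nat list \<Rightarrow> 'a::comm_monoid_add) \<Rightarrow> (nat list \<Rightarrow> 'a)" where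
  "zeta F = (\<lambda>I. \<Sum>z\<in>{z. z \<in> supp F \<and> packed z \<and> WC z = I}. F z)"

definition word_of_comp :: "nat list \<Rightarrow> nat list" where
  "word_of_comp I = concat (map (\<lambda>(k, i). replicate i (Suc k)) (List.enumerate 0 I))"

definition sigma :: "(nat list \<Rightarrow> 'a::comm_monoid_add) \<Rightarrow> (nat list \<Rightarrow> 'a)" where
  "sigma f = (\<lambda>z. \<Sum>I\<in>{I. I \<in> supp f \<and> word_of_comp I = z}. f I)"

definition sym_star :: "'a::field \<Rightarrow> (nat list \<Rightarrow> 'a) \<Rightarrow> (nat list \<Rightarrow> 'a) \<Rightarrow> (nat list \<Rightarrow> 'a)" where
  "sym_star q f g = zeta (wq_star q (sigma f) (sigma g))"

definition Psi :: "nat list \<Rightarrow> (nat list \<Rightarrow> 'a::{zero,one})" where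
  "Psi K = (\<lambda>I. if I = K then 1 else 0)"

definition Lq :: "nat list \<Rightarrow> 'a::comm_semiring_1 \<Rightarrow> (nat list \<Rightarrow> 'a)" where
  "Lq J q = (\<lambda>I. \<Sum>K\<in>{K. comp_leq K J}. q ^ st K J * Psi K I)"

definition qint :: "nat \<Rightarrow> 'a::comm_semiring_1 \<Rightarrow> 'a" where
  "qint n q = (\<Sum>i<n. q ^ i)"

definition qfact :: "nat \<Rightarrow> 'a::comm_semiring_1 \<Rightarrow> 'a" where
  "qfact n q = (\<Prod>i=1..n. qint i q)"

definition qbinom :: "nat \<Rightarrow> nat \<Rightarrow> 'a::field \<Rightarrow> 'a" where
  "qbinom n k q = (if k \<le> n then qfact n q / (qfact k q * qfact (n - k) q) else 0)"

definition qvar :: "'k::field poly fract" where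
  "qvar = Fract [:0, 1:] 1"

definition tri :: "nat \<Rightarrow> nat list \<Rightarrow> nat list" where
  "tri p I = (p + hd I) # tl I"

definition mK :: "nat \<Rightarrow> nat list \<Rightarrow> nat" where
  "mK p K = card {d \<in> Des K. p \<le> d}"

end

theory Submission
  imports Defs
begin

text \<open>
  The coefficient of \<open>\<Psi>\<^sub>J\<close> in \<open>L\<^sub>p \<star>\<^sub>q L\<^sub>I\<close> is a sum over packed words \<open>z = x y\<close> with
  \<open>|x| = p\<close>, \<open>x\<close> and \<open>y\<close> weakly increasing, the value changes of \<open>y\<close> containing \<open>Des I\<close>
  and \<open>WC z = J\<close>; such a \<open>y\<close> packs to the word of the unique \<open>K \<preceq> I\<close> whose descents are its
  value changes, and \<open>z\<close> contributes \<open>q^(st(K,I) + sinv z)\<close>. Since \<open>Des K\<close> is \<open>Des J\<close> above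
  \<open>p\<close> shifted down by \<open>p\<close>, such words exist only for \<open>J \<preceq> p \<triangleright> I\<close>, and then
  \<open>st(K,I) = st(J, p \<triangleright> I)\<close>. The remaining sum of \<open>q^(sinv z)\<close> is computed by a bijection with
  the sequences \<open>c\<^sub>1 \<le> \<dots> \<le> c\<^sub>p \<le> m\<^sub>J\<close>, where \<open>c\<^sub>i\<close> counts the distinct letters of \<open>y\<close> below
  \<open>x\<^sub>i\<close>: it turns \<open>sinv z\<close> into \<open>\<Sum> c\<^sub>i\<close>, and the generating function of these sequences is
  the q-binomial coefficient \<open>[m\<^sub>J + p, p]\<^sub>q\<close> by the q-Pascal recursion.
\<close>

section \<open>Weakly increasing sequences and q-binomial coefficients\<close>

definition incr_lists :: "nat \<Rightarrow> nat \<Rightarrow> nat list set" where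
  "incr_lists p M = {c. length c = p \<and> sorted c \<and> (\<forall>x\<in>set c. x \<le> M)}"

lemma finite_incr_lists: "finite (incr_lists p M)"
proof -
  have "incr_lists p M \<subseteq> {xs. set xs \<subseteq> {0..M} \<and> length xs = p}"
    unfolding incr_lists_def by auto
  moreover have "finite {xs. set xs \<subseteq> {0..M} \<and> length xs = p}"
    by (rule finite_lists_length_eq) simp
  ultimately show ?thesis by (rule finite_subset)
qed

lemma incr_lists_iff_nth:
  "c \<in> incr_lists p M \<longleftrightarrow>
     length c = p \<and> (\<forall>i j. i \<le> j \<longrightarrow> j < p \<longrightarrow> c ! i \<le> c ! j) \<and> (\<forall>i<p. c ! i \<le> M)"
  unfolding incr_lists_def sorted_iff_nth_mono by (fastforce simp: in_set_conv_nth)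

lemma incr_lists_0: "incr_lists 0 M = {[]}" unfolding incr_lists_def by auto

lemma incr_lists_bound_0: "incr_lists p 0 = {replicate p 0}"
  unfolding incr_lists_def
  by (auto simp: sorted_replicate intro!: replicate_eqI)

lemma incr_lists_Suc_Suc:
  "incr_lists (Suc p) (Suc M) = (Cons 0) ` incr_lists p (Suc M) \<union> (map Suc) ` incr_lists (Suc p) M"
proof (rule set_eqI, rule iffI)
  fix c assume "c \<in> incr_lists (Suc p) (Suc M)"
  then obtain a c' where c: "c = a # c'" "length c' = p" "sorted (a#c')" "\<forall>x\<in>set (a#c'). x \<le> Suc M"
    unfolding incr_lists_def by (cases c) auto
  show "c \<in> (Cons 0) ` incr_lists p (Suc M) \<union> (map Suc) ` incr_lists (Suc p) M"
  proof (cases "a = 0")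
    case True then show ?thesis using c unfolding incr_lists_def by auto
  next
    case False
    then have pos: "\<forall>x\<in>set c. 0 < x" using c by auto
    have "c = map Suc (map (\<lambda>x. x - 1) c)" using pos by (induct c) auto
    moreover have "map (\<lambda>x. x - 1) c \<in> incr_lists (Suc p) M"
      unfolding incr_lists_def using c pos
      by (auto simp: sorted_map intro!: sorted_wrt_mono_rel[where P="(\<le>)"] diff_le_mono)
    ultimately show ?thesis by blast
  qed
next
  fix c assume "c \<in> (Cons 0) ` incr_lists p (Suc M) \<union> (map Suc) ` incr_lists (Suc p) M"
  then show "c \<in> incr_lists (Suc p) (Suc M)" unfolding incr_lists_def by (auto simp: sorted_map)
qed

definition incr_lists_gf :: "'a::comm_semiring_1 \<Rightarrow> nat \<Rightarrow> nat \<Rightarrow> 'a" where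
  "incr_lists_gf q p M = (\<Sum>c\<in>incr_lists p M. q ^ sum_list c)"

lemma sum_list_map_Suc: "sum_list (map Suc c) = sum_list c + length c"
  by (induct c) auto

lemma incr_lists_gf_Suc_Suc:
  "incr_lists_gf q (Suc p) (Suc M) = incr_lists_gf q p (Suc M) + q ^ Suc p * incr_lists_gf q (Suc p) M"
proof -
  have disj: "(Cons 0) ` incr_lists p (Suc M) \<inter> (map Suc) ` incr_lists (Suc p) M = {}" by auto
  have "incr_lists_gf q (Suc p) (Suc M) = (\<Sum>c\<in>(Cons 0) ` incr_lists p (Suc M). q ^ sum_list c)
     + (\<Sum>c\<in>(map Suc) ` incr_lists (Suc p) M. q ^ sum_list c)"
    unfolding incr_lists_gf_def incr_lists_Suc_Suc
    by (rule sum.union_disjoint) (auto simp: finite_incr_lists disj)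
  also have "(\<Sum>c\<in>(Cons 0) ` incr_lists p (Suc M). q ^ sum_list c) = incr_lists_gf q p (Suc M)"
    unfolding incr_lists_gf_def by (subst sum.reindex) (auto simp: inj_on_def)
  also have "(\<Sum>c\<in>(map Suc) ` incr_lists (Suc p) M. q ^ sum_list c) =
      (\<Sum>c\<in>incr_lists (Suc p) M. q ^ sum_list (map Suc c))"
    by (subst sum.reindex) (auto simp: inj_on_def)
  also have "\<dots> = q ^ Suc p * incr_lists_gf q (Suc p) M"
    unfolding incr_lists_gf_def sum_distrib_left
    by (rule sum.cong) (auto simp: sum_list_map_Suc incr_lists_def power_add mult_ac)
  finally show ?thesis .
qed

lemma incr_lists_gf_0: "incr_lists_gf q 0 M = 1" unfolding incr_lists_gf_def incr_lists_0 by simp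

lemma incr_lists_gf_bound_0: "incr_lists_gf q p 0 = 1"
  unfolding incr_lists_gf_def incr_lists_bound_0 by (simp add: sum_list_replicate)

lemma qint_Suc: "qint (Suc n) q = qint n q + q ^ n" unfolding qint_def by simp

lemma qfact_Suc: "qfact (Suc n) q = qfact n q * qint (Suc n) q"
  unfolding qfact_def by (simp add: prod.cl_ivl_Suc) 

lemma qint_add: "qint (a + b) q = qint a q + q ^ a * qint b q"
  by (induct b) (auto simp: qint_Suc algebra_simps power_add, simp add: qint_def)

lemma qfact_nonzero:
  assumes "\<And>i. 0 < i \<Longrightarrow> qint i q \<noteq> (0::'a::field)"
  shows "qfact n q \<noteq> 0"
  unfolding qfact_def using assms by (auto simp: prod_zero_iff)

lemma qbinom_Suc_Suc:
  fixes q :: "'a::field"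
  assumes nz: "\<And>i. 0 < i \<Longrightarrow> qint i q \<noteq> 0"
  shows "qbinom (Suc n) (Suc k) q = qbinom n k q + q ^ Suc k * qbinom n (Suc k) q"
proof (cases "k < n")
  case True
  then obtain j where n: "n = k + Suc j" by (metis add_Suc_right less_iff_Suc_add add.commute)
  have e1: "Suc n - Suc k = Suc j" "n - k = Suc j" "n - Suc k = j" using n by auto
  have fa: "qfact k q \<noteq> 0" "qfact j q \<noteq> 0" "qint (Suc k) q \<noteq> 0" "qint (Suc j) q \<noteq> 0"
    using nz qfact_nonzero[OF nz] by auto
  have id: "qint (Suc n) q = qint (Suc k) q + q ^ Suc k * qint (Suc j) q"
    using qint_add[of "Suc k" "Suc j" q] n by simp
  show ?thesis using True fa unfolding qbinom_def e1
    by (simp add: qfact_Suc id field_simps)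
next
  case False
  show ?thesis
  proof (cases "k = n")
    case True
    have "qfact n q \<noteq> 0" "qint (Suc n) q \<noteq> 0" using nz qfact_nonzero[OF nz] by auto
    then show ?thesis using True unfolding qbinom_def by (simp add: qfact_Suc field_simps qfact_def)
  next
    case False
    then show ?thesis using \<open>\<not> k < n\<close> unfolding qbinom_def by auto
  qed
qed

lemma qfact_0 [simp]: "qfact 0 q = 1"
  unfolding qfact_def by simp

lemma qbinom_0: "qfact n q \<noteq> 0 \<Longrightarrow> qbinom n 0 (q::'a::field) = 1"
  unfolding qbinom_def by simp

lemma qbinom_self: "qfact n q \<noteq> 0 \<Longrightarrow> qbinom n n (q::'a::field) = 1"
  unfolding qbinom_def by simp

lemma incr_lists_gf_eq_qbinom:
  fixes q :: "'a::field"
  assumes nz: "\<And>i. 0 < i \<Longrightarrow> qint i q \<noteq> 0"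
  shows "incr_lists_gf q p M = qbinom (M + p) p q"
proof (induction p arbitrary: M)
  case 0
  then show ?case using qfact_nonzero[OF nz] by (simp add: incr_lists_gf_0 qbinom_0)
next
  case (Suc p)
  note IH_p = Suc.IH
  show ?case
  proof (induction M)
    case 0
    then show ?case using qfact_nonzero[OF nz] by (simp add: incr_lists_gf_bound_0 qbinom_self)
  next
    case (Suc M)
    have "incr_lists_gf q (Suc p) (Suc M) =
        incr_lists_gf q p (Suc M) + q ^ Suc p * incr_lists_gf q (Suc p) M"
      by (rule incr_lists_gf_Suc_Suc)
    also have "\<dots> = qbinom (Suc M + p) p q + q ^ Suc p * qbinom (M + Suc p) (Suc p) q"
      using Suc.IH IH_p[of "Suc M"] by simp
    also have "\<dots> = qbinom (Suc M + Suc p) (Suc p) q"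
      using qbinom_Suc_Suc[OF nz, of "M + Suc p" p] by simp
    finally show ?case .
  qed
qed

lemma Fract_pow: "(Fract (a::'a::idom) 1) ^ j = Fract (a ^ j) 1"
  by (induct j) (auto simp: One_fract_def)

lemma qint_Fract: "qint i (Fract (a::'a::idom) 1) = Fract (qint i a) 1"
  by (induct i) (auto simp: qint_Suc Fract_pow, simp add: qint_def Zero_fract_def)

lemma qint_qvar_nonzero: "0 < i \<Longrightarrow> qint i (qvar :: 'k::field_char_0 poly fract) \<noteq> 0"
proof -
  assume i: "0 < i"
  have "poly (qint i [:0, 1::'k:]) 1 = of_nat i"
    unfolding qint_def by (simp add: poly_sum)
  then have "qint i [:0, 1::'k:] \<noteq> 0" using i by auto
  then show ?thesis unfolding qvar_def qint_Fract by (simp add: Zero_fract_def eq_fract)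
qed

lemma qvar_nonzero: "(qvar :: 'k::field_char_0 poly fract) \<noteq> 0"
  unfolding qvar_def by (simp add: Zero_fract_def eq_fract)

section \<open>Order patterns and packing\<close>

lemma in_set_drop_iff: "x \<in> set (drop k v) \<longleftrightarrow> (\<exists>j. k \<le> j \<and> j < length v \<and> v ! j = x)"
proof
  assume "x \<in> set (drop k v)"
  then obtain i where "i < length (drop k v)" "drop k v ! i = x" by (auto simp: in_set_conv_nth)
  then show "\<exists>j. k \<le> j \<and> j < length v \<and> v ! j = x" by (intro exI[of _ "k + i"]) auto
next
  assume "\<exists>j. k \<le> j \<and> j < length v \<and> v ! j = x"
  then obtain j where "k \<le> j" "j < length v" "v ! j = x" by auto
  then show "x \<in> set (drop k v)" unfolding in_set_conv_nth
    by (intro exI[of _ "j - k"]) auto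
qed

definition same_pattern :: "nat list \<Rightarrow> nat list \<Rightarrow> bool" where
  "same_pattern v w \<longleftrightarrow> length v = length w \<and> (\<forall>i<length v. \<forall>j<length v. v!i \<le> v!j \<longleftrightarrow> w!i \<le> w!j)"

lemma same_pattern_nth_eq: "same_pattern v w \<Longrightarrow> i < length v \<Longrightarrow> j < length v \<Longrightarrow> v!i = v!j \<longleftrightarrow> w!i = w!j"
  unfolding same_pattern_def by (metis order_antisym order_refl)

lemma same_pattern_nth_le: "same_pattern v w \<Longrightarrow> i < length v \<Longrightarrow> j < length v \<Longrightarrow> v!i \<le> v!j \<longleftrightarrow> w!i \<le> w!j"
  unfolding same_pattern_def by blast

lemma same_pattern_nth_less: "same_pattern v w \<Longrightarrow> i < length v \<Longrightarrow> j < length v \<Longrightarrow> v!i < v!j \<longleftrightarrow> w!i < w!j"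
  unfolding same_pattern_def by (meson not_le)

definition rank_in :: "nat set \<Rightarrow> nat \<Rightarrow> nat" where "rank_in A x = card {a\<in>A. a \<le> x}"

lemma rank_in_le_iff:
  assumes "finite A" "x \<in> A" "y \<in> A"
  shows "rank_in A x \<le> rank_in A y \<longleftrightarrow> x \<le> y"
proof
  assume "x \<le> y" then show "rank_in A x \<le> rank_in A y" unfolding rank_in_def
    by (intro card_mono) (use assms in auto)
next
  assume h: "rank_in A x \<le> rank_in A y"
  show "x \<le> y"
  proof (rule ccontr)
    assume "\<not> x \<le> y"
    then have "{a\<in>A. a \<le> y} \<subset> {a\<in>A. a \<le> x}" using assms by auto
    then have "rank_in A y < rank_in A x"
      unfolding rank_in_def by (intro psubset_card_mono) (use assms in auto)
    with h show False by simp
  qed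
qed

lemma rank_in_image:
  assumes "finite A"
  shows "rank_in A ` A = {1..card A}"
proof -
  have inj: "inj_on (rank_in A) A"
    unfolding inj_on_def using rank_in_le_iff[OF assms] by (metis order_antisym order_refl)
  have sub: "rank_in A ` A \<subseteq> {1..card A}"
  proof
    fix r assume "r \<in> rank_in A ` A"
    then obtain x where x: "x \<in> A" "r = rank_in A x" by auto
    have "rank_in A x \<ge> 1" unfolding rank_in_def using x assms
    proof -
      have "finite {a\<in>A. a \<le> x}" "x \<in> {a\<in>A. a \<le> x}" using x assms by auto
      then have "card {a\<in>A. a \<le> x} > 0" by (auto simp: card_gt_0_iff)
      then show "1 \<le> card {a\<in>A. a \<le> x}" by simp
    qed
    moreover have "rank_in A x \<le> card A"
      unfolding rank_in_def by (rule card_mono) (use assms in auto)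
    ultimately show "r \<in> {1..card A}" using x by auto
  qed
  have "card (rank_in A ` A) = card {1..card A}" using card_image[OF inj] by simp
  then show ?thesis using sub by (intro card_subset_eq) auto
qed

lemma pack_eq_map_rank_in: "pack w = map (rank_in (set w)) w" unfolding pack_def rank_in_def by simp

lemma length_pack[simp]: "length (pack w) = length w" unfolding pack_def by simp

lemma nth_pack: "i < length w \<Longrightarrow> pack w ! i = rank_in (set w) (w ! i)"
  unfolding pack_eq_map_rank_in by simp

lemma packed_pack: "packed (pack w)"
proof -
  have "set (pack w) = rank_in (set w) ` set w" unfolding pack_eq_map_rank_in by simp
  also have "\<dots> = {1..card (set w)}" by (rule rank_in_image) simp
  finally show ?thesis unfolding packed_def by simp
qed

lemma same_pattern_pack: "same_pattern w (pack w)"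
  unfolding same_pattern_def
proof (intro conjI allI impI)
  fix i j assume "i < length w" "j < length w"
  then show "w!i \<le> w!j \<longleftrightarrow> pack w!i \<le> pack w!j"
    using rank_in_le_iff[of "set w" "w!i" "w!j"] by (simp add: nth_pack)
qed simp

lemma pack_packed:
  assumes "packed z"
  shows "pack z = z"
proof (rule nth_equalityI)
  fix i assume i: "i < length (pack z)"
  obtain M where s: "set z = {1..M}" using assms unfolding packed_def by blast
  have zi: "z ! i \<in> {1..M}" using i nth_mem[of i z] unfolding s by simp
  have "{a\<in>set z. a \<le> z!i} = {1..z!i}" unfolding s using zi by auto
  then show "pack z ! i = z ! i" using i by (simp add: nth_pack rank_in_def)
qed simp

lemma card_image_same_pattern:
  assumes sp: "same_pattern v w" and A: "A \<subseteq> {..<length v}"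
  shows "card ((!) v ` A) = card ((!) w ` A)"
proof -
  define g where "g x = w ! (SOME j. j \<in> A \<and> v ! j = x)" for x
  have gj: "g (v ! j) = w ! j" if "j \<in> A" for j
  proof -
    have ex: "\<exists>j'. j' \<in> A \<and> v ! j' = v ! j" using that by blast
    let ?j = "SOME j'. j' \<in> A \<and> v ! j' = v ! j"
    have "?j \<in> A \<and> v ! ?j = v ! j" using someI_ex[OF ex] .
    then show ?thesis unfolding g_def using same_pattern_nth_eq[OF sp] A that by blast
  qed
  have "(!) w ` A = g ` ((!) v ` A)" using gj by (auto simp: image_image)
  moreover have "inj_on g ((!) v ` A)"
  proof (rule inj_onI)
    fix x y assume "x \<in> (!) v ` A" "y \<in> (!) v ` A" "g x = g y"
    then obtain a b where "a \<in> A" "b \<in> A" "x = v!a" "y = v!b" "w!a = w!b" using gj by auto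
    then show "x = y" using same_pattern_nth_eq[OF sp] A by blast
  qed
  ultimately show ?thesis by (simp add: card_image)
qed

lemma filter_set_eq_image_nth: "{a \<in> set v. P a} = (!) v ` {j. j < length v \<and> P (v ! j)}"
  by (auto simp: in_set_conv_nth)

lemma pack_eq_if_same_pattern:
  assumes sp: "same_pattern v w"
  shows "pack v = pack w"
proof (rule nth_equalityI)
  show "length (pack v) = length (pack w)" using sp unfolding same_pattern_def by simp
  fix i assume i: "i < length (pack v)"
  let ?A = "{j. j < length v \<and> v ! j \<le> v ! i}"
  have eqA: "?A = {j. j < length w \<and> w ! j \<le> w ! i}"
    using same_pattern_nth_le[OF sp] i sp unfolding same_pattern_def by auto
  have "card ((!) v ` ?A) = card ((!) w ` ?A)" by (rule card_image_same_pattern[OF sp]) auto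
  then show "pack v ! i = pack w ! i" using i sp eqA unfolding same_pattern_def
    by (simp add: nth_pack rank_in_def filter_set_eq_image_nth[where P="\<lambda>a. a \<le> _"])
qed

lemma finite_packed_length: "finite {z. packed z \<and> length z = N}"
proof -
  have "{z. packed z \<and> length z = N} \<subseteq> {z. set z \<subseteq> {0..N} \<and> length z = N}"
  proof
    fix z assume z: "z \<in> {z. packed z \<and> length z = N}"
    then obtain M where M: "set z = {1..M}" unfolding packed_def by auto
    have "card (set z) \<le> length z" by (rule card_length)
    then have "M \<le> N" using M z by simp
    then show "z \<in> {z. set z \<subseteq> {0..N} \<and> length z = N}" using M z by auto
  qed
  moreover have "finite {z. set z \<subseteq> {0..N} \<and> length z = N}" by (rule finite_lists_length_eq) simp
  ultimately show ?thesis by (rule finite_subset)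
qed

definition WDes :: "nat list \<Rightarrow> nat set" where
  "WDes w = {p. 1 \<le> p \<and> p < length w \<and> w ! (p - 1) \<notin> set (drop p w)}"

lemma WC_eq_comp_from_WDes: "WC w = comp_from_des (length w) (WDes w)"
  unfolding WC_def WDes_def by simp

lemma WDes_subset: "WDes w \<subseteq> {1..<length w}"
  unfolding WDes_def by auto

lemma Suc_in_WDes_iff: "Suc t < length w \<Longrightarrow> Suc t \<in> WDes w \<longleftrightarrow> w ! t \<notin> set (drop (Suc t) w)"
  unfolding WDes_def by simp

lemma same_pattern_occurs_later:
  assumes sp: "same_pattern v w" and j: "j < length v"
  shows "v ! j \<in> set (drop k v) \<longleftrightarrow> w ! j \<in> set (drop k w)"
proof -
  have l: "length v = length w" using sp unfolding same_pattern_def by simp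
  show ?thesis unfolding in_set_drop_iff l
  proof
    assume "\<exists>j'. k \<le> j' \<and> j' < length w \<and> v ! j' = v ! j"
    then obtain j' where "k \<le> j'" "j' < length w" "v ! j' = v ! j" by blast
    then show "\<exists>j'. k \<le> j' \<and> j' < length w \<and> w ! j' = w ! j"
      using same_pattern_nth_eq[OF sp, of j' j] j l by auto
  next
    assume "\<exists>j'. k \<le> j' \<and> j' < length w \<and> w ! j' = w ! j"
    then obtain j' where "k \<le> j'" "j' < length w" "w ! j' = w ! j" by blast
    then show "\<exists>j'. k \<le> j' \<and> j' < length w \<and> v ! j' = v ! j"
      using same_pattern_nth_eq[OF sp, of j' j] j l by auto
  qed
qed

lemma WDes_same_pattern:
  assumes sp: "same_pattern v w"
  shows "WDes v = WDes w"
proof -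
  have l: "length v = length w" using sp unfolding same_pattern_def by simp
  have "v ! (k - 1) \<in> set (drop k v) \<longleftrightarrow> w ! (k - 1) \<in> set (drop k w)" if "1 \<le> k" "k < length v" for k
    by (rule same_pattern_occurs_later[OF sp]) (use that in auto)
  then show ?thesis unfolding WDes_def l by auto
qed

lemma sinv_same_pattern:
  assumes sp: "same_pattern v w"
  shows "sinv v = sinv w"
proof -
  have l: "length v = length w" using sp unfolding same_pattern_def by simp
  have "{(i, j). i < j \<and> j < length v \<and> v ! j < v ! i \<and> v ! j \<notin> set (drop (Suc j) v)}
      = {(i, j). i < j \<and> j < length w \<and> w ! j < w ! i \<and> w ! j \<notin> set (drop (Suc j) w)}"
  proof -
    have A: "\<And>i j. i < j \<Longrightarrow> j < length v \<Longrightarrow> v!j < v!i \<longleftrightarrow> w!j < w!i"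
      using same_pattern_nth_less[OF sp] by auto
    have B: "\<And>j. j < length v \<Longrightarrow> v!j \<in> set (drop (Suc j) v) \<longleftrightarrow> w!j \<in> set (drop (Suc j) w)"
      using same_pattern_occurs_later[OF sp] by auto
    show ?thesis using A B l by auto
  qed
  then show ?thesis unfolding sinv_def by simp
qed

lemma sinv_sorted_eq_0:
  assumes "sorted w"
  shows "sinv w = 0"
proof -
  have E: "{(i, j). i < j \<and> j < length w \<and> w ! j < w ! i \<and> w ! j \<notin> set (drop (Suc j) w)} = {}"
  proof -
    have "\<not> w ! j < w ! i" if "i < j" "j < length w" for i j
      using assms that unfolding sorted_iff_nth_mono by (simp add: not_less)
    then show ?thesis by auto
  qed
  show ?thesis unfolding sinv_def E by simp
qed

definition sorted_slice :: "nat list \<Rightarrow> nat \<Rightarrow> nat \<Rightarrow> bool" where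
  "sorted_slice v a b \<longleftrightarrow> (\<forall>i j. a \<le> i \<longrightarrow> i \<le> j \<longrightarrow> j < b \<longrightarrow> v ! i \<le> v ! j)"

lemma sorted_take_iff_slice: "p \<le> length v \<Longrightarrow> sorted (take p v) \<longleftrightarrow> sorted_slice v 0 p"
  unfolding sorted_iff_nth_mono sorted_slice_def by auto

lemma sorted_drop_iff_slice: "sorted (drop p v) \<longleftrightarrow> sorted_slice v p (length v)"
  unfolding sorted_iff_nth_mono sorted_slice_def
proof (intro iffI allI impI)
  fix i j assume H: "\<forall>i j. i \<le> j \<longrightarrow> j < length (drop p v) \<longrightarrow> drop p v ! i \<le> drop p v ! j"
    and h: "p \<le> i" "i \<le> j" "j < length v"
  have "i - p \<le> j - p" "j - p < length (drop p v)" using h by auto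
  then show "v ! i \<le> v ! j" using H[rule_format, of "i - p" "j - p"] h by auto
next
  fix i j assume H: "\<forall>i j. p \<le> i \<longrightarrow> i \<le> j \<longrightarrow> j < length v \<longrightarrow> v ! i \<le> v ! j"
    and h: "i \<le> j" "j < length (drop p v)"
  then show "drop p v ! i \<le> drop p v ! j" using H[rule_format, of "p + i" "p + j"] by auto
qed

lemma sorted_slice_same_pattern:
  assumes sp: "same_pattern v w" "b \<le> length v"
  shows "sorted_slice v a b \<longleftrightarrow> sorted_slice w a b"
  unfolding sorted_slice_def
proof (intro iffI allI impI)
  fix i j assume H: "\<forall>i j. a \<le> i \<longrightarrow> i \<le> j \<longrightarrow> j < b \<longrightarrow> v ! i \<le> v ! j" and h: "a \<le> i" "i \<le> j" "j < b"
  then show "w ! i \<le> w ! j" using same_pattern_nth_le[OF sp(1), of i j] sp(2) by auto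
next
  fix i j assume H: "\<forall>i j. a \<le> i \<longrightarrow> i \<le> j \<longrightarrow> j < b \<longrightarrow> w ! i \<le> w ! j" and h: "a \<le> i" "i \<le> j" "j < b"
  then show "v ! i \<le> v ! j" using same_pattern_nth_le[OF sp(1), of i j] sp(2) by auto
qed

lemma nth_in_drop_Suc_iff_sorted_slice:
  assumes "sorted_slice w a (length w)" "a \<le> t" "Suc t < length w"
  shows "w ! t \<in> set (drop (Suc t) w) \<longleftrightarrow> w ! t = w ! Suc t"
proof
  assume "w ! t \<in> set (drop (Suc t) w)"
  then obtain j where "Suc t \<le> j" "j < length w" "w ! j = w ! t" unfolding in_set_drop_iff by blast
  moreover have "w ! t \<le> w ! Suc t" "w ! Suc t \<le> w ! j"
    using assms calculation unfolding sorted_slice_def by (metis le_SucI order_refl le_trans)+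
  ultimately show "w ! t = w ! Suc t" by simp
next
  assume "w ! t = w ! Suc t"
  then show "w ! t \<in> set (drop (Suc t) w)" using assms(3) unfolding in_set_drop_iff by auto
qed

lemma sorted_slice_nth_eq_iff:
  assumes so: "sorted_slice w a b" and ij: "a \<le> i" "i \<le> j" "j < b"
  shows "w ! i = w ! j \<longleftrightarrow> (\<forall>t. i \<le> t \<longrightarrow> t < j \<longrightarrow> w ! t = w ! Suc t)"
  using ij
proof (induct j)
  case 0 then show ?case by auto
next
  case (Suc j)
  show ?case
  proof (cases "i = Suc j")
    case True then show ?thesis by auto
  next
    case False
    then have ij2: "i \<le> j" using Suc.prems by simp
    have IH: "w ! i = w ! j \<longleftrightarrow> (\<forall>t. i \<le> t \<longrightarrow> t < j \<longrightarrow> w ! t = w ! Suc t)"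
      using Suc.hyps ij2 Suc.prems by simp
    have m1: "w ! i \<le> w ! j" "w ! j \<le> w ! Suc j"
      using so ij2 Suc.prems unfolding sorted_slice_def by auto
    have "w ! i = w ! Suc j \<longleftrightarrow> w ! i = w ! j \<and> w ! j = w ! Suc j" using m1 by auto
    also have "\<dots> \<longleftrightarrow> (\<forall>t. i \<le> t \<longrightarrow> t < Suc j \<longrightarrow> w ! t = w ! Suc t)"
      using IH ij2 by (auto simp: less_Suc_eq)
    finally show ?thesis .
  qed
qed

lemma sorted_slice_le_iff_same_steps:
  assumes v: "sorted_slice v a b" and w: "sorted_slice w a b"
    and steps: "\<And>t. a \<le> t \<Longrightarrow> Suc t < b \<Longrightarrow> v ! t = v ! Suc t \<longleftrightarrow> w ! t = w ! Suc t"
    and ij: "a \<le> i" "i < b" "a \<le> j" "j < b"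
  shows "v ! i \<le> v ! j \<longleftrightarrow> w ! i \<le> w ! j"
proof (cases "i \<le> j")
  case True
  then show ?thesis using v w ij unfolding sorted_slice_def by blast
next
  case False
  then have ji: "j \<le> i" by simp
  have "v ! i \<le> v ! j \<longleftrightarrow> v ! j = v ! i" "w ! i \<le> w ! j \<longleftrightarrow> w ! j = w ! i"
    using v w ji ij unfolding sorted_slice_def by (auto intro: antisym)
  moreover have "v ! t = v ! Suc t \<longleftrightarrow> w ! t = w ! Suc t" if "j \<le> t" "t < i" for t
    using steps[of t] that ij by simp
  then have "v ! j = v ! i \<longleftrightarrow> w ! j = w ! i"
    unfolding sorted_slice_nth_eq_iff[OF v ij(3) ji ij(2)] sorted_slice_nth_eq_iff[OF w ij(3) ji ij(2)]
    by blast
  ultimately show ?thesis by simp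
qed

section \<open>Compositions and their words\<close>

lemma Des_Nil[simp]: "Des [] = {}" unfolding Des_def by auto

lemma Des_Cons: "Des (a # K) = (if K = [] then {} else insert a ((+) a ` Des K))"
proof (cases "K = []")
  case True then show ?thesis unfolding Des_def by auto
next
  case False
  have "Des (a # K) = {sum_list (take k (a # K)) | k. 0 < k \<and> k < Suc (length K)}"
    unfolding Des_def by simp
  also have "\<dots> = {a + sum_list (take k K) | k. k < length K}"
  proof (rule set_eqI, rule iffI)
    fix x assume "x \<in> {sum_list (take k (a # K)) | k. 0 < k \<and> k < Suc (length K)}"
    then obtain k where "x = sum_list (take k (a # K))" "0 < k" "k < Suc (length K)" by blast
    then show "x \<in> {a + sum_list (take k K) | k. k < length K}"
      by (intro CollectI exI[of _ "k - 1"]) (cases k, auto)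
  next
    fix x assume "x \<in> {a + sum_list (take k K) | k. k < length K}"
    then obtain k where "x = a + sum_list (take k K)" "k < length K" by blast
    then show "x \<in> {sum_list (take k (a # K)) | k. 0 < k \<and> k < Suc (length K)}"
      by (intro CollectI exI[of _ "Suc k"]) auto
  qed
  also have "\<dots> = insert a ((+) a ` Des K)"
  proof (rule set_eqI, rule iffI)
    fix x assume "x \<in> {a + sum_list (take k K) | k. k < length K}"
    then obtain k where "x = a + sum_list (take k K)" "k < length K" by blast
    then show "x \<in> insert a ((+) a ` Des K)" unfolding Des_def by (cases "k = 0") auto
  next
    fix x assume "x \<in> insert a ((+) a ` Des K)"
    then show "x \<in> {a + sum_list (take k K) | k. k < length K}"
      unfolding Des_def using False by (auto intro: exI[of _ 0])
  qed
  finally show ?thesis using False by simp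
qed

lemma is_comp_Cons[simp]: "is_comp (a # K) \<longleftrightarrow> 0 < a \<and> is_comp K" unfolding is_comp_def by auto

lemma is_comp_Nil[simp]: "is_comp []" unfolding is_comp_def by auto

lemma Des_subset: "is_comp K \<Longrightarrow> Des K \<subseteq> {1..<sum_list K}"
proof (induct K)
  case (Cons a K)
  show ?case
  proof (cases "K = []")
    case True then show ?thesis by (simp add: Des_Cons)
  next
    case False
    have "sum_list K > 0" using Cons.prems False by (cases K) auto
    then show ?thesis using Cons False by (auto simp: Des_Cons)
  qed
qed simp

lemma Des_Cons_ge: "is_comp (a # K) \<Longrightarrow> x \<in> Des (a # K) \<Longrightarrow> a \<le> x"
  using Des_subset[of K] by (auto simp: Des_Cons split: if_splits)

lemma comp_eq_by_Des: "is_comp K \<Longrightarrow> is_comp K' \<Longrightarrow> sum_list K = sum_list K' \<Longrightarrow> Des K = Des K' \<Longrightarrow> K = K'"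
proof (induct K arbitrary: K')
  case Nil
  then show ?case by (cases K') auto
next
  case (Cons a K)
  obtain a' K1 where K': "K' = a' # K1" using Cons.prems by (cases K') auto
  show ?case
  proof (cases "K = []")
    case True
    have "K1 = []" using Cons.prems True K' by (auto simp: Des_Cons split: if_splits)
    then show ?thesis using Cons.prems True K' by simp
  next
    case False
    have K1: "K1 \<noteq> []" using Cons.prems False K' by (auto simp: Des_Cons split: if_splits)
    have "a \<in> Des K'" "a' \<in> Des (a # K)" using Cons.prems False K1 K' by (auto simp: Des_Cons)
    then have "a' \<le> a" "a \<le> a'"
      using Des_Cons_ge[of a' K1] Des_Cons_ge[of a K] Cons.prems K' by auto
    then have aa: "a = a'" by simp
    have "insert a ((+) a ` Des K) = insert a ((+) a ` Des K1)"
      using Cons.prems False K1 K' aa by (simp add: Des_Cons)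
    moreover have "a \<notin> (+) a ` Des K" "a \<notin> (+) a ` Des K1"
      using Des_subset[of K] Des_subset[of K1] Cons.prems K' by auto
    ultimately have "(+) a ` Des K = (+) a ` Des K1" by (metis insert_ident)
    then have "Des K = Des K1" by (simp add: inj_image_eq_iff)
    then have "K = K1" using Cons.hyps[of K1] Cons.prems K' aa by auto
    then show ?thesis using K' aa by simp
  qed
qed

definition word_of_des :: "nat \<Rightarrow> nat set \<Rightarrow> nat list" where
  "word_of_des n S = map (\<lambda>k. Suc (card {d\<in>S. d \<le> k})) [0..<n]"

definition changes :: "nat list \<Rightarrow> nat set" where
  "changes v = {k. 1 \<le> k \<and> k < length v \<and> v ! (k - 1) \<noteq> v ! k}"

lemma length_word_of_des[simp]: "length (word_of_des n S) = n" unfolding word_of_des_def by simp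

lemma nth_word_of_des: "k < n \<Longrightarrow> word_of_des n S ! k = Suc (card {d\<in>S. d \<le> k})"
  unfolding word_of_des_def by simp

lemma word_of_comp_Cons: "word_of_comp (a # K) = replicate a 1 @ map Suc (word_of_comp K)"
  unfolding word_of_comp_def
  by (simp add: enumerate_Suc_eq map_concat comp_def case_prod_beta)

lemma card_le_insert_shift:
  fixes S :: "nat set"
  assumes "finite S" and "0 \<notin> S"
  shows "card {d \<in> insert a ((+) a ` S). d \<le> a + k} = Suc (card {e\<in>S. e \<le> k})"
proof -
  have "{d \<in> insert a ((+) a ` S). d \<le> a + k} = insert a ((+) a ` {e\<in>S. e \<le> k})"
    by (auto simp: image_iff)
  moreover have "a \<notin> (+) a ` {e\<in>S. e \<le> k}" using assms(2) by auto
  ultimately show ?thesis using assms by (simp add: card_image)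
qed

lemma finite_Des[simp]: "finite (Des K)"
proof -
  have "Des K = (\<lambda>k. sum_list (take k K)) ` {k. 0 < k \<and> k < length K}" unfolding Des_def by auto
  then show ?thesis by simp
qed

lemma word_of_comp_eq_word_of_des: "is_comp K \<Longrightarrow> word_of_comp K = word_of_des (sum_list K) (Des K)"
proof (induct K)
  case Nil then show ?case by (simp add: word_of_comp_def word_of_des_def)
next
  case (Cons a K)
  show ?case
  proof (cases "K = []")
    case True
    then show ?thesis by (simp add: word_of_comp_def word_of_des_def Des_Cons map_replicate_const)
  next
    case False
    note Kne = False
    have IH: "word_of_comp K = word_of_des (sum_list K) (Des K)" using Cons by simp
    have z: "0 \<notin> Des K" using Des_subset[of K] Cons.prems by auto
    show ?thesis
    proof (rule nth_equalityI)
      show "length (word_of_comp (a # K)) = length (word_of_des (sum_list (a # K)) (Des (a # K)))"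
        by (simp add: word_of_comp_Cons IH)
      fix k assume k: "k < length (word_of_comp (a # K))"
      then have k2: "k < a + sum_list K" by (simp add: word_of_comp_Cons IH)
      show "word_of_comp (a # K) ! k = word_of_des (sum_list (a # K)) (Des (a # K)) ! k"
      proof (cases "k < a")
        case True
        have "{d \<in> Des (a # K). d \<le> k} = {}" using Des_Cons_ge[of a K] Cons.prems True by fastforce
        then show ?thesis using True k2 by (simp add: word_of_comp_Cons nth_append nth_word_of_des)
      next
        case False
        then obtain k' where kk: "k = a + k'" by (metis le_add_diff_inverse not_less)
        have "card {d \<in> Des (a # K). d \<le> a + k'} = Suc (card {e\<in>Des K. e \<le> k'})"
          using card_le_insert_shift[OF finite_Des z] Kne by (simp add: Des_Cons)
        then show ?thesis using kk k2 by (simp add: word_of_comp_Cons nth_append nth_word_of_des IH)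
      qed
    qed
  qed
qed

lemma card_le_Suc:
  assumes "finite S"
  shows "card {d\<in>S. d \<le> Suc k} = card {d\<in>S. d \<le> k} + (if Suc k \<in> S then 1 else 0)"
proof -
  have "{d\<in>S. d \<le> Suc k} = {d\<in>S. d \<le> k} \<union> ({Suc k} \<inter> S)" by auto
  then show ?thesis using assms by (auto simp: card_Un_disjoint)
qed

lemma changes_word_of_des:
  assumes "S \<subseteq> {1..<n}"
  shows "changes (word_of_des n S) = S"
proof -
  have fin: "finite S" using assms finite_subset by blast
  have key: "word_of_des n S ! (k - 1) \<noteq> word_of_des n S ! k \<longleftrightarrow> k \<in> S" if h: "1 \<le> k" "k < n" for k
  proof -
    obtain k' where "k = Suc k'" using h by (cases k) auto
    then show ?thesis using h card_le_Suc[OF fin, of k'] by (simp add: nth_word_of_des)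
  qed
  show ?thesis
  proof (rule set_eqI)
    fix k show "k \<in> changes (word_of_des n S) \<longleftrightarrow> k \<in> S"
    proof (cases "1 \<le> k \<and> k < n")
      case True then show ?thesis using key[of k] unfolding changes_def by auto
    next
      case False then show ?thesis using assms unfolding changes_def by auto
    qed
  qed
qed

lemma sorted_word_of_des: "sorted (word_of_des n S)" if "finite S"
  unfolding sorted_iff_nth_mono using that by (auto simp: nth_word_of_des intro!: card_mono)

lemma packed_sorted_nth_0:
  assumes "packed v" "sorted v" "v \<noteq> []"
  shows "v ! 0 = 1"
proof -
  obtain M where s: "set v = {1..M}" using assms(1) unfolding packed_def by blast
  have "v ! 0 \<in> {1..M}" using s assms(3) nth_mem[of 0 v] by auto
  then have "1 \<in> set v" using s by auto
  then obtain j where "j < length v" "v ! j = 1" by (auto simp: in_set_conv_nth)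
  then show ?thesis
    using assms(2) \<open>v ! 0 \<in> {1..M}\<close> by (metis atLeastAtMost_iff le_antisym le0 sorted_nth_mono)
qed

lemma packed_sorted_nth_Suc:
  assumes "packed v" "sorted v" "Suc k < length v" "v ! k \<noteq> v ! Suc k"
  shows "v ! Suc k = Suc (v ! k)"
proof -
  obtain M where s: "set v = {1..M}" using assms(1) unfolding packed_def by blast
  have le: "v ! k \<le> v ! Suc k" using assms(2,3) by (simp add: sorted_iff_nth_mono)
  have "\<not> Suc (v ! k) < v ! Suc k"
  proof
    assume lt: "Suc (v ! k) < v ! Suc k"
    have "v ! Suc k \<in> {1..M}" using s assms(3) nth_mem[of "Suc k" v] by auto
    then have "Suc (v ! k) \<in> set v" using s lt by auto
    then obtain j where j: "j < length v" "v ! j = Suc (v ! k)" by (auto simp: in_set_conv_nth)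
    show False
      using sorted_nth_mono[OF assms(2), of j k] sorted_nth_mono[OF assms(2), of "Suc k" j] j lt assms(3)
      by (cases "j \<le> k") auto
  qed
  then show ?thesis using le assms(4) by simp
qed

lemma packed_sorted_eq_word_of_des:
  assumes "packed v" "sorted v"
  shows "v = word_of_des (length v) (changes v)"
proof (rule nth_equalityI)
  have fin: "finite (changes v)" unfolding changes_def by simp
  fix k assume "k < length v"
  then show "v ! k = word_of_des (length v) (changes v) ! k"
  proof (induction k)
    case 0
    have "{d \<in> changes v. d \<le> 0} = {}" unfolding changes_def by auto
    then show ?case using packed_sorted_nth_0[OF assms] 0 by (simp add: nth_word_of_des)
  next
    case (Suc k)
    have "Suc k \<in> changes v \<longleftrightarrow> v ! k \<noteq> v ! Suc k" using Suc.prems unfolding changes_def by auto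
    then have "v ! Suc k = v ! k + (if Suc k \<in> changes v then 1 else 0)"
      using packed_sorted_nth_Suc[OF assms Suc.prems] by (cases "v ! k = v ! Suc k") auto
    then show ?case using Suc card_le_Suc[OF fin, of k] by (simp add: nth_word_of_des)
  qed
qed simp

lemma changes_same_pattern:
  assumes sp: "same_pattern v w"
  shows "changes v = changes w"
proof (rule set_eqI)
  fix k
  have l: "length v = length w" using sp unfolding same_pattern_def by simp
  show "k \<in> changes v \<longleftrightarrow> k \<in> changes w"
  proof (cases "1 \<le> k \<and> k < length v")
    case True
    then show ?thesis using same_pattern_nth_eq[OF sp, of "k - 1" k] l unfolding changes_def by auto
  next
    case False then show ?thesis using l unfolding changes_def by auto
  qed
qed

lemma sorted_same_pattern: "same_pattern v w \<Longrightarrow> sorted v \<longleftrightarrow> sorted w"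
  using sorted_slice_same_pattern[of v w "length v" 0]
    sorted_drop_iff_slice[of 0 v] sorted_drop_iff_slice[of 0 w]
  unfolding same_pattern_def by simp

lemma changes_subset: "changes y \<subseteq> {1..<length y}" unfolding changes_def by auto

lemma length_word_of_comp: "is_comp K \<Longrightarrow> length (word_of_comp K) = sum_list K"
  by (simp add: word_of_comp_eq_word_of_des)

lemma word_of_comp_inj:
  assumes "is_comp K" "is_comp K'" "word_of_comp K = word_of_comp K'"
  shows "K = K'"
proof -
  have s: "sum_list K = sum_list K'" using length_word_of_comp assms by metis
  have "Des K = changes (word_of_comp K)"
    using word_of_comp_eq_word_of_des[OF assms(1)] changes_word_of_des[OF Des_subset[OF assms(1)]]
    by simp
  also have "\<dots> = Des K'"
    using word_of_comp_eq_word_of_des[OF assms(2)] changes_word_of_des[OF Des_subset[OF assms(2)]] assms(3)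
    by simp
  finally show ?thesis using comp_eq_by_Des assms s by blast
qed

lemma sorted_word_of_comp: "is_comp K \<Longrightarrow> sorted (word_of_comp K)"
  by (simp add: word_of_comp_eq_word_of_des sorted_word_of_des)

lemma length_le_sum_list: "is_comp K \<Longrightarrow> length K \<le> sum_list K"
  by (induct K) auto

lemma finite_comps: "finite {K. is_comp K \<and> sum_list K = n}"
proof -
  have "{K. is_comp K \<and> sum_list K = n} \<subseteq> {xs. set xs \<subseteq> {0..n} \<and> length xs \<le> n}"
    using length_le_sum_list member_le_sum_list by fastforce
  moreover have "finite {xs. set xs \<subseteq> {0..n} \<and> length xs \<le> n}"
    by (rule finite_lists_length_le) simp
  ultimately show ?thesis by (rule finite_subset)
qed

definition diffs :: "nat list \<Rightarrow> nat list" where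
  "diffs l = map2 (\<lambda>a b. a - b) l (0 # l)"

lemma length_diffs [simp]: "length (diffs l) = length l"
  unfolding diffs_def by simp

lemma nth_diffs: "j < length l \<Longrightarrow> diffs l ! j = l ! j - (if j = 0 then 0 else l ! (j - 1))"
  unfolding diffs_def by (cases j) auto

lemma sum_list_take_diffs:
  assumes "sorted l" "j < length l"
  shows "sum_list (take (Suc j) (diffs l)) = l ! j"
  using assms(2)
proof (induction j)
  case 0
  then show ?case by (cases l) (auto simp: diffs_def)
next
  case (Suc j)
  have "take (Suc (Suc j)) (diffs l) = take (Suc j) (diffs l) @ [diffs l ! Suc j]"
    using Suc.prems by (simp add: take_Suc_conv_app_nth)
  moreover have "l ! j \<le> l ! Suc j" using assms(1) Suc.prems by (simp add: sorted_iff_nth_mono)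
  ultimately show ?case using Suc by (simp add: nth_diffs)
qed

lemma is_comp_diffs:
  assumes "sorted_wrt (<) l" "\<forall>x\<in>set l. 0 < x"
  shows "is_comp (diffs l)"
  unfolding is_comp_def
proof
  fix x assume "x \<in> set (diffs l)"
  then obtain j where j: "j < length l" "x = diffs l ! j" by (auto simp: in_set_conv_nth)
  show "0 < x"
  proof (cases j)
    case 0 then show ?thesis using j assms(2) by (simp add: nth_diffs)
  next
    case (Suc i) then show ?thesis using j assms(1) by (simp add: nth_diffs sorted_wrt_iff_nth_less)
  qed
qed

lemma sum_list_diffs: "sorted l \<Longrightarrow> l \<noteq> [] \<Longrightarrow> sum_list (diffs l) = last l"
  using sum_list_take_diffs[of l "length l - 1"] by (simp add: last_conv_nth)

lemma Des_diffs:
  assumes "sorted l"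
  shows "Des (diffs l) = set (butlast l)"
proof -
  have idx: "{k. 0 < k \<and> k < length l} = Suc ` {..<length l - 1}"
    by (auto simp: image_iff gr0_conv_Suc)
  have "Des (diffs l) = (\<lambda>k. sum_list (take k (diffs l))) ` {k. 0 < k \<and> k < length l}"
    unfolding Des_def length_diffs by blast
  also have "\<dots> = (\<lambda>j. sum_list (take (Suc j) (diffs l))) ` {..<length l - 1}"
    unfolding idx image_image ..
  also have "\<dots> = (!) l ` {..<length l - 1}"
    using sum_list_take_diffs[OF assms] by (intro image_cong) auto
  also have "\<dots> = set (butlast l)"
    by (simp add: butlast_conv_take nth_image lessThan_atLeast0)
  finally show ?thesis .
qed

lemma sorted_list_of_set_insert_greater:
  fixes n :: "'a::linorder"
  assumes "finite S" "\<forall>x\<in>S. x < n"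
  shows "sorted_list_of_set (insert n S) = sorted_list_of_set S @ [n]"
  using assms
  by (subst sorted_list_of_set_unique[symmetric]) (auto simp: sorted_wrt_append card_insert_if)

lemma comp_from_des_props:
  assumes "0 < n" "S \<subseteq> {1..<n}"
  shows "is_comp (comp_from_des n S)" "sum_list (comp_from_des n S) = n" "Des (comp_from_des n S) = S"
proof -
  have fin: "finite S" using assms(2) finite_subset by blast
  have lt: "\<forall>x\<in>S. x < n" using assms(2) by auto
  define l where "l = sorted_list_of_set S @ [n]"
  have "(S \<union> {n}) \<inter> {0<..n} = insert n S" using assms by auto
  then have cfd: "comp_from_des n S = diffs l"
    using sorted_list_of_set_insert_greater[OF fin lt]
    unfolding comp_from_des_def diffs_def l_def Let_def by auto
  have st: "sorted_wrt (<) l"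
    using sorted_list_of_set_insert_greater[OF fin lt] strict_sorted_list_of_set[of "insert n S"]
    unfolding l_def by auto
  have "\<forall>x\<in>set l. 0 < x" using fin assms unfolding l_def by auto
  then show "is_comp (comp_from_des n S)" unfolding cfd using is_comp_diffs[OF st] by blast
  show "sum_list (comp_from_des n S) = n"
    unfolding cfd using sum_list_diffs[OF sorted_wrt_mono_rel[OF _ st]] by (simp add: l_def)
  show "Des (comp_from_des n S) = S"
    unfolding cfd using Des_diffs[OF sorted_wrt_mono_rel[OF _ st]] fin by (simp add: l_def)
qed

lemma WC_eq_iff:
  assumes "0 < length w"
  shows "WC w = J \<longleftrightarrow> is_comp J \<and> sum_list J = length w \<and> Des J = WDes w"
proof -
  note c = comp_from_des_props[OF assms WDes_subset]
  show ?thesis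
    unfolding WC_eq_comp_from_WDes using c comp_eq_by_Des[of "comp_from_des (length w) (WDes w)" J]
    by auto
qed

section \<open>Shuffle classes\<close>

lemma mult_add_le_iff:
  fixes a b r s P :: nat
  assumes "r < P" "s < P"
  shows "a * P + r \<le> b * P + s \<longleftrightarrow> a < b \<or> (a = b \<and> r \<le> s)"
proof (cases "a < b")
  case True
  then have "Suc a * P \<le> b * P" by (intro mult_le_mono1) simp
  then show ?thesis using True assms by simp
next
  case False
  show ?thesis
  proof (cases "a = b")
    case True then show ?thesis by simp
  next
    case False2: False
    then have "b < a" using False by simp
    then have "Suc b * P \<le> a * P" by (intro mult_le_mono1) simp
    then show ?thesis using False False2 assms by simp
  qed
qed

lemma mult_add_eq_iff:
  fixes a b r s P :: nat
  assumes "r < P" "s < P"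
  shows "a * P + r = b * P + s \<longleftrightarrow> a = b \<and> r = s"
  using mult_add_le_iff[OF assms(1,2), of a b] mult_add_le_iff[OF assms(2,1), of b a] by auto

lemma mult_add_less_iff:
  fixes a b r s P :: nat
  assumes "r < P" "s < P"
  shows "a * P + r < b * P + s \<longleftrightarrow> a < b \<or> (a = b \<and> r < s)"
  using mult_add_le_iff[OF assms(2,1), of b a] by auto

locale shuffle_class =
  fixes p n :: nat and E :: "nat set"
  assumes p_pos: "0 < p" and n_pos: "0 < n" and E_sub: "E \<subseteq> {1..<p+n}"
begin

abbreviation "N \<equiv> p + n"

abbreviation "P \<equiv> p + 2"

definition class_words :: "nat list set" where
  "class_words = {z. length z = N \<and> packed z \<and> WDes z = E \<and> sorted_slice z 0 p \<and> sorted_slice z p N}"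

definition code_of :: "nat list \<Rightarrow> nat list" where
  "code_of z = map (\<lambda>i. card {v\<in>set (drop p z). v < z ! i}) [0..<p]"

definition rank_second :: "nat list \<Rightarrow> nat \<Rightarrow> nat" where
  "rank_second z x = card {v\<in>set (drop p z). v < x}"

text \<open>
  A word \<open>z\<close> of the class, split into its first \<open>p\<close> and last \<open>n\<close> letters, is encoded by
  \<open>code_of z\<close>, which counts for each letter of the first part the distinct letters of the
  second part below it. Conversely, \<open>cw c\<close> writes a letter as a two-digit number in base \<open>P\<close>:
  the second part is constant on the blocks cut out by the descents beyond \<open>p\<close>, and the
  \<open>i\<close>-th letter of the first part equals the letters of block \<open>c ! i\<close>, unless it is private
  (the run of its value in the first part ends at a descent \<open>d \<le> p\<close>, so the value occurs
  nowhere later); private letters get values of their own, kept distinct and in order by the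
  number of descents before them.
\<close>


definition block_of :: "nat \<Rightarrow> nat" where "block_of i = card {d\<in>E. p < d \<and> d \<le> i}"

definition num_blocks :: nat where "num_blocks = card {d\<in>E. p < d} + 1"

definition max_code :: nat where "max_code = card {d\<in>E. p \<le> d}"

definition des_rank :: "nat \<Rightarrow> nat" where "des_rank i = card {d\<in>E. d \<le> i}"

definition is_private :: "nat list \<Rightarrow> nat \<Rightarrow> bool" where
  "is_private c i \<longleftrightarrow> (\<exists>d\<in>E. i < d \<and> d \<le> p \<and> c ! (d - 1) = c ! i)"

definition tiebreak :: "nat list \<Rightarrow> nat \<Rightarrow> nat" where
  "tiebreak c i = (if is_private c i then des_rank i else p + 1)"

definition cw :: "nat list \<Rightarrow> nat \<Rightarrow> nat" where
  "cw c i = (if i < p then c ! i * P + tiebreak c i else block_of i * P + (p + 1))"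

definition canonical_word :: "nat list \<Rightarrow> nat list" where "canonical_word c = map (cw c) [0..<N]"

lemma cw_first: "i < p \<Longrightarrow> cw c i = c ! i * P + tiebreak c i" unfolding cw_def by simp

lemma cw_second: "\<not> i < p \<Longrightarrow> cw c i = block_of i * P + (p + 1)" unfolding cw_def by simp

lemma finite_E: "finite E" using E_sub finite_subset by blast

lemma length_canonical_word[simp]: "length (canonical_word c) = N"
  unfolding canonical_word_def by simp

lemma nth_canonical_word: "i < N \<Longrightarrow> canonical_word c ! i = cw c i"
  unfolding canonical_word_def by simp

lemma des_rank_le: "des_rank i \<le> i"
proof -
  have "{d\<in>E. d \<le> i} \<subseteq> {1..i}" using E_sub by auto
  then have "des_rank i \<le> card {1..i}" unfolding des_rank_def by (intro card_mono) auto
  then show ?thesis by simp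
qed

lemma des_rank_Suc: "des_rank (Suc i) = des_rank i + (if Suc i \<in> E then 1 else 0)"
  unfolding des_rank_def using card_le_Suc[OF finite_E] .

lemma des_rank_mono: "i \<le> j \<Longrightarrow> des_rank i \<le> des_rank j"
  unfolding des_rank_def by (intro card_mono) (use finite_E in auto)

lemma des_rank_strict: "i < j \<Longrightarrow> Suc i \<in> E \<Longrightarrow> des_rank i < des_rank j"
proof -
  assume "i < j" "Suc i \<in> E"
  then have "des_rank i < des_rank (Suc i)" using des_rank_Suc by simp
  also have "\<dots> \<le> des_rank j" using \<open>i < j\<close> by (intro des_rank_mono) simp
  finally show ?thesis .
qed

lemma tiebreak_less: "i < p \<Longrightarrow> tiebreak c i < P"
  unfolding tiebreak_def using des_rank_le[of i] by auto

lemma tiebreak_le: "i < p \<Longrightarrow> tiebreak c i \<le> p + 1"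
  unfolding tiebreak_def using des_rank_le[of i] by auto

lemma block_of_le: "i \<le> p \<Longrightarrow> block_of i = 0" unfolding block_of_def by auto

lemma block_of_Suc: "p \<le> i \<Longrightarrow> block_of (Suc i) = block_of i + (if Suc i \<in> E then 1 else 0)"
proof -
  assume pi: "p \<le> i"
  have "{d\<in>E. p < d \<and> d \<le> Suc i} = {d\<in>E. p < d \<and> d \<le> i} \<union> ({Suc i} \<inter> E)" using pi by auto
  then show ?thesis unfolding block_of_def using finite_E by (auto simp: card_Un_disjoint)
qed

lemma block_of_mono: "i \<le> j \<Longrightarrow> block_of i \<le> block_of j"
  unfolding block_of_def by (intro card_mono) (use finite_E in auto)

lemma block_of_strict: "p \<le> i \<Longrightarrow> i < j \<Longrightarrow> Suc i \<in> E \<Longrightarrow> block_of i < block_of j"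
proof -
  assume "p \<le> i" "i < j" "Suc i \<in> E"
  then have "block_of i < block_of (Suc i)" using block_of_Suc by simp
  also have "\<dots> \<le> block_of j" using \<open>i < j\<close> by (intro block_of_mono) simp
  finally show ?thesis .
qed

lemma block_of_last: "block_of (N - 1) = num_blocks - 1"
proof -
  have "{d\<in>E. p < d \<and> d \<le> N - 1} = {d\<in>E. p < d}" using E_sub by auto
  then show ?thesis unfolding block_of_def num_blocks_def by simp
qed

lemma num_blocks_pos: "0 < num_blocks" unfolding num_blocks_def by simp

lemma block_of_less: "i < N \<Longrightarrow> block_of i < num_blocks"
proof -
  assume "i < N"
  then have "i \<le> N - 1" by simp
  then have "block_of i \<le> num_blocks - 1" using block_of_mono[of i "N - 1"] block_of_last by simp
  then show ?thesis using num_blocks_pos by simp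
qed

lemma max_code_eq: "max_code = num_blocks - 1 + (if p \<in> E then 1 else 0)"
proof -
  have "{d\<in>E. p \<le> d} = {d\<in>E. p < d} \<union> ({p} \<inter> E)" by auto
  then show ?thesis
    unfolding max_code_def num_blocks_def using finite_E by (auto simp: card_Un_disjoint)
qed

lemma max_code_le: "max_code \<le> num_blocks" using max_code_eq num_blocks_pos by simp

lemma block_of_surj: "b < num_blocks \<Longrightarrow> \<exists>i. p \<le> i \<and> i < N \<and> block_of i = b"
proof -
  assume b: "b < num_blocks"
  have "\<exists>i. p \<le> i \<and> i \<le> N - 1 \<and> int (block_of i) = int b"
    by (rule nat_intermed_int_val) (use block_of_Suc block_of_le block_of_last b n_pos in auto)
  then show ?thesis using n_pos by fastforce
qed

definition block_ends :: "nat set" where "block_ends = {j. p \<le> j \<and> j < N \<and> (Suc j = N \<or> Suc j \<in> E)}"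

lemma inj_on_block_of_ends: "inj_on block_of block_ends"
proof (rule inj_onI)
  have key: "block_of j < block_of j'" if "j \<in> block_ends" "j' \<in> block_ends" "j < j'" for j j'
  proof -
    have "Suc j \<in> E" using that unfolding block_ends_def by auto
    then show ?thesis using block_of_strict[of j j'] that unfolding block_ends_def by auto
  qed
  fix j j' assume "j \<in> block_ends" "j' \<in> block_ends" "block_of j = block_of j'"
  then show "j = j'" using key[of j j'] key[of j' j] by (cases "j < j'"; cases "j' < j") auto
qed

lemma block_of_ends_image: "block_of ` block_ends = {..<num_blocks}"
proof
  show "block_of ` block_ends \<subseteq> {..<num_blocks}"
    using block_of_less unfolding block_ends_def by auto
next
  show "{..<num_blocks} \<subseteq> block_of ` block_ends"
  proof
    fix b assume "b \<in> {..<num_blocks}"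
    then obtain i where i: "p \<le> i" "i < N" "block_of i = b" using block_of_surj by auto
    define Sb where "Sb = {j. p \<le> j \<and> j < N \<and> block_of j = b}"
    have fin: "finite Sb" unfolding Sb_def by simp
    have ne: "Sb \<noteq> {}" using i unfolding Sb_def by auto
    define j0 where "j0 = Max Sb"
    have j0: "j0 \<in> Sb" unfolding j0_def using Max_in[OF fin ne] .
    have mx: "j \<le> j0" if "j \<in> Sb" for j unfolding j0_def using Max_ge[OF fin that] .
    have "j0 \<in> block_ends"
    proof (rule ccontr)
      assume "j0 \<notin> block_ends"
      then have "Suc j0 < N" "Suc j0 \<notin> E" using j0 unfolding block_ends_def Sb_def by auto
      then have "Suc j0 \<in> Sb" using j0 block_of_Suc[of j0] unfolding Sb_def by auto
      then show False using mx[of "Suc j0"] by simp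
    qed
    then show "b \<in> block_of ` block_ends" using j0 unfolding Sb_def by auto
  qed
qed

lemma block_of_image: "block_of ` {p..<N} = {..<num_blocks}"
proof
  show "block_of ` {p..<N} \<subseteq> {..<num_blocks}" using block_of_less by auto
  show "{..<num_blocks} \<subseteq> block_of ` {p..<N}" using block_of_surj by fastforce
qed

context
  fixes c assumes c: "c \<in> incr_lists p max_code"
begin

lemma code_mono: "i \<le> j \<Longrightarrow> j < p \<Longrightarrow> c ! i \<le> c ! j" using c unfolding incr_lists_iff_nth by blast

lemma code_bound: "i < p \<Longrightarrow> c ! i \<le> max_code" using c unfolding incr_lists_iff_nth by blast

lemma private_mono: "i \<le> j \<Longrightarrow> j < p \<Longrightarrow> c ! i = c ! j \<Longrightarrow> is_private c j \<Longrightarrow> is_private c i"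
  unfolding is_private_def by (metis le_less_trans)

lemma private_Suc_iff:
  "Suc t < p \<Longrightarrow> Suc t \<notin> E \<Longrightarrow> c ! t = c ! Suc t \<Longrightarrow> is_private c t \<longleftrightarrow> is_private c (Suc t)"
proof
  assume h: "Suc t < p" "Suc t \<notin> E" "c ! t = c ! Suc t" "is_private c t"
  then obtain d where d: "d \<in> E" "t < d" "d \<le> p" "c ! (d - 1) = c ! t"
    unfolding is_private_def by blast
  then have "Suc t < d" using h(2) by (metis Suc_lessI)
  then show "is_private c (Suc t)" unfolding is_private_def using d h(3) by auto
next
  assume h: "Suc t < p" "Suc t \<notin> E" "c ! t = c ! Suc t" "is_private c (Suc t)"
  then show "is_private c t" using private_mono[of t "Suc t"] by simp
qed

lemma private_if_des: "t < p \<Longrightarrow> Suc t \<in> E \<Longrightarrow> is_private c t"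
  unfolding is_private_def by (intro bexI[of _ "Suc t"]) auto

lemma code_less_if_not_private:
  assumes "i < p" "\<not> is_private c i"
  shows "c ! i < num_blocks"
proof (cases "p \<in> E")
  case True
  have "c ! i \<noteq> max_code"
  proof
    assume eq: "c ! i = max_code"
    have "c ! (p - 1) = c ! i"
      using code_mono[of i "p - 1"] code_bound[of "p - 1"] eq assms p_pos by simp
    then have "is_private c i"
      unfolding is_private_def using True assms by (intro bexI[of _ p]) auto
    then show False using assms by simp
  qed
  then show ?thesis using code_bound[of i] assms max_code_eq True num_blocks_pos by simp
next
  case False
  then show ?thesis using code_bound[of i] assms max_code_eq num_blocks_pos by simp
qed

lemma cw_neq_Suc_first:
  assumes "Suc t < p"
  shows "cw c t \<noteq> cw c (Suc t) \<longleftrightarrow> (Suc t \<in> E \<or> c ! t < c ! Suc t)"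
proof -
  have t: "t < p" using assms by simp
  have eq: "cw c t = cw c (Suc t) \<longleftrightarrow> c ! t = c ! Suc t \<and> tiebreak c t = tiebreak c (Suc t)"
    unfolding cw_first[OF t] cw_first[OF assms]
    by (rule mult_add_eq_iff[OF tiebreak_less[OF t] tiebreak_less[OF assms]])
  have le: "c ! t \<le> c ! Suc t" using code_mono assms by simp
  show ?thesis
  proof (cases "c ! t = c ! Suc t")
    case False then show ?thesis using eq le by auto
  next
    case True
    show ?thesis
    proof (cases "Suc t \<in> E")
      case inE: True
      have pt: "is_private c t" using private_if_des[OF t inE] .
      have "tiebreak c t \<noteq> tiebreak c (Suc t)"
      proof (cases "is_private c (Suc t)")
        case True then show ?thesis using pt des_rank_Suc[of t] inE unfolding tiebreak_def by simp
      next
        case False then show ?thesis using pt des_rank_le[of t] t unfolding tiebreak_def by simp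
      qed
      then show ?thesis using eq inE by simp
    next
      case notE: False
      have "is_private c t \<longleftrightarrow> is_private c (Suc t)" using private_Suc_iff[OF assms notE True] .
      moreover have "des_rank (Suc t) = des_rank t" using des_rank_Suc[of t] notE by simp
      ultimately have "tiebreak c t = tiebreak c (Suc t)" unfolding tiebreak_def by simp
      then show ?thesis using eq True notE by simp
    qed
  qed
qed

lemma cw_first_le_second_iff:
  assumes "i < p" "p \<le> j"
  shows "cw c i \<le> cw c j \<longleftrightarrow> c ! i \<le> block_of j"
proof -
  have nj: "\<not> j < p" using assms by simp
  have "c ! i * P + tiebreak c i \<le> block_of j * P + (p + 1) \<longleftrightarrow>
      c ! i < block_of j \<or> (c ! i = block_of j \<and> tiebreak c i \<le> p + 1)"
    by (rule mult_add_le_iff) (use tiebreak_less[OF assms(1)] in auto)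
  then show ?thesis
    unfolding cw_first[OF assms(1)] cw_second[OF nj] using tiebreak_le[OF assms(1)] by auto
qed

lemma cw_second_le_first_iff:
  assumes "i < p" "p \<le> j"
  shows "cw c j \<le> cw c i \<longleftrightarrow> (block_of j < c ! i \<or> (block_of j = c ! i \<and> \<not> is_private c i))"
proof -
  have nj: "\<not> j < p" using assms by simp
  have "block_of j * P + (p + 1) \<le> c ! i * P + tiebreak c i \<longleftrightarrow>
      block_of j < c ! i \<or> (block_of j = c ! i \<and> p + 1 \<le> tiebreak c i)"
    by (rule mult_add_le_iff) (use tiebreak_less[OF assms(1)] in auto)
  moreover have "p + 1 \<le> tiebreak c i \<longleftrightarrow> \<not> is_private c i"
    unfolding tiebreak_def using des_rank_le[of i] assms by auto
  ultimately show ?thesis unfolding cw_first[OF assms(1)] cw_second[OF nj] by simp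
qed

lemma cw_neq_Suc_second: "p \<le> t \<Longrightarrow> cw c t \<noteq> cw c (Suc t) \<longleftrightarrow> Suc t \<in> E"
  by (simp add: cw_second block_of_Suc)

lemma canonical_sorted_first: "sorted_slice (canonical_word c) 0 p"
  unfolding sorted_slice_def
proof (intro allI impI)
  fix i j assume h: "0 \<le> i" "i \<le> j" "j < p"
  have ip: "i < p" using h by simp
  have le: "c ! i \<le> c ! j" using code_mono h by simp
  have "tiebreak c i \<le> tiebreak c j" if eq: "c ! i = c ! j"
  proof (cases "is_private c j")
    case True
    then have "is_private c i" using private_mono[OF h(2,3) eq] by simp
    then show ?thesis using True des_rank_mono[OF h(2)] unfolding tiebreak_def by simp
  next
    case False then show ?thesis using tiebreak_le[OF ip] h unfolding tiebreak_def by auto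
  qed
  moreover have "c ! i * P + tiebreak c i \<le> c ! j * P + tiebreak c j \<longleftrightarrow>
      c ! i < c ! j \<or> (c ! i = c ! j \<and> tiebreak c i \<le> tiebreak c j)"
    by (rule mult_add_le_iff) (use tiebreak_less[OF ip] tiebreak_less[OF h(3)] in auto)
  ultimately have "cw c i \<le> cw c j" unfolding cw_first[OF ip] cw_first[OF h(3)] using le by auto
  then show "canonical_word c ! i \<le> canonical_word c ! j" using h by (simp add: nth_canonical_word)
qed

lemma canonical_sorted_second: "sorted_slice (canonical_word c) p N"
  unfolding sorted_slice_def
proof (intro allI impI)
  fix i j assume h: "p \<le> i" "i \<le> j" "j < N"
  have "block_of i * P \<le> block_of j * P" by (intro mult_le_mono1 block_of_mono h(2))
  then show "canonical_word c ! i \<le> canonical_word c ! j"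
    using h by (simp add: nth_canonical_word cw_second)
qed

lemma cw_mono_second: "p \<le> i \<Longrightarrow> i \<le> j \<Longrightarrow> j < N \<Longrightarrow> cw c i \<le> cw c j"
  using canonical_sorted_second unfolding sorted_slice_def by (simp add: nth_canonical_word)

lemma cw_mono_first: "i \<le> j \<Longrightarrow> j < p \<Longrightarrow> cw c i \<le> cw c j"
  using canonical_sorted_first unfolding sorted_slice_def by (simp add: nth_canonical_word)

lemma cw_occurs_later_second:
  assumes "p \<le> t" "Suc t < N"
  shows "(\<exists>j. Suc t \<le> j \<and> j < N \<and> cw c j = cw c t) \<longleftrightarrow> Suc t \<notin> E"
proof
  assume "\<exists>j. Suc t \<le> j \<and> j < N \<and> cw c j = cw c t"
  then obtain j where j: "Suc t \<le> j" "j < N" "cw c j = cw c t" by blast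
  have "cw c t \<le> cw c (Suc t)" "cw c (Suc t) \<le> cw c j"
    using cw_mono_second[of t "Suc t"] cw_mono_second[of "Suc t" j] assms j by auto
  then show "Suc t \<notin> E" using cw_neq_Suc_second[OF assms(1)] j by simp
next
  assume "Suc t \<notin> E"
  then show "\<exists>j. Suc t \<le> j \<and> j < N \<and> cw c j = cw c t"
    using cw_neq_Suc_second[OF assms(1)] assms(2) by auto
qed

lemma cw_private_occurs_later:
  assumes t: "t < p" and pt: "is_private c t"
  shows "(\<exists>j. Suc t \<le> j \<and> j < N \<and> cw c j = cw c t) \<longleftrightarrow> Suc t \<notin> E"
proof
  assume "\<exists>j. Suc t \<le> j \<and> j < N \<and> cw c j = cw c t"
  then obtain j where j: "Suc t \<le> j" "j < N" "cw c j = cw c t" by blast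
  have rt: "tiebreak c t = des_rank t" "des_rank t < p"
    using pt des_rank_le[of t] t unfolding tiebreak_def by auto
  show "Suc t \<notin> E"
  proof
    assume E: "Suc t \<in> E"
    show False
    proof (cases "j < p")
      case True
      have "c ! j * P + tiebreak c j = c ! t * P + tiebreak c t \<longleftrightarrow>
          c ! j = c ! t \<and> tiebreak c j = tiebreak c t"
        by (rule mult_add_eq_iff) (use tiebreak_less[OF True] tiebreak_less[OF t] in auto)
      then have "tiebreak c j = des_rank t"
        using j rt unfolding cw_first[OF True] cw_first[OF t] by simp
      moreover have "des_rank t < des_rank j" using des_rank_strict[of t j] E j by simp
      ultimately show False unfolding tiebreak_def using rt by (auto split: if_splits)
    next
      case False
      have "block_of j * P + (p + 1) = c ! t * P + tiebreak c t \<longleftrightarrow>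
          block_of j = c ! t \<and> p + 1 = tiebreak c t"
        by (rule mult_add_eq_iff) (use tiebreak_less[OF t] in auto)
      then show False using j rt unfolding cw_second[OF False] cw_first[OF t] by simp
    qed
  qed
next
  assume E: "Suc t \<notin> E"
  obtain d where d: "d \<in> E" "t < d" "d \<le> p" "c ! (d - 1) = c ! t"
    using pt unfolding is_private_def by blast
  then have "Suc t < d" using E by (metis Suc_lessI)
  then have "c ! t = c ! Suc t"
    using code_mono[of t "Suc t"] code_mono[of "Suc t" "d - 1"] d by simp
  then have "cw c (Suc t) = cw c t" using cw_neq_Suc_first[of t] \<open>Suc t < d\<close> d E by auto
  then show "\<exists>j. Suc t \<le> j \<and> j < N \<and> cw c j = cw c t" using \<open>Suc t < d\<close> d by auto
qed

lemma cw_public_in_second: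
  assumes t: "t < p" and npt: "\<not> is_private c t"
  shows "\<exists>j. p \<le> j \<and> j < N \<and> cw c j = cw c t"
proof -
  obtain j where j: "p \<le> j" "j < N" "block_of j = c ! t"
    using block_of_surj code_less_if_not_private[OF t npt] by blast
  then have "cw c j = cw c t" using npt t by (simp add: cw_second cw_first tiebreak_def)
  then show ?thesis using j by blast
qed

lemma WDes_canonical_word: "WDes (canonical_word c) = E"
proof (rule set_eqI)
  fix k
  show "k \<in> WDes (canonical_word c) \<longleftrightarrow> k \<in> E"
  proof (cases "1 \<le> k \<and> k < N")
    case False then show ?thesis using E_sub unfolding WDes_def by auto
  next
    case True
    then obtain t where k: "k = Suc t" "Suc t < N" by (cases k) auto
    have "k \<in> WDes (canonical_word c) \<longleftrightarrow> \<not> (\<exists>j. Suc t \<le> j \<and> j < N \<and> cw c j = cw c t)"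
      using k unfolding WDes_def in_set_drop_iff by (auto simp: nth_canonical_word)
    moreover have "(\<exists>j. Suc t \<le> j \<and> j < N \<and> cw c j = cw c t) \<longleftrightarrow> Suc t \<notin> E"
    proof (cases "p \<le> t")
      case True then show ?thesis by (rule cw_occurs_later_second[OF _ k(2)])
    next
      case False
      then have t: "t < p" by simp
      show ?thesis
      proof (cases "is_private c t")
        case True then show ?thesis by (rule cw_private_occurs_later[OF t])
      next
        case False
        obtain j where "p \<le> j" "j < N" "cw c j = cw c t"
          using cw_public_in_second[OF t False] by blast
        moreover have "Suc t \<notin> E" using private_if_des[OF t] False by blast
        ultimately show ?thesis using t by (metis Suc_leI le_trans)
      qed
    qed
    ultimately show ?thesis using k by simp
  qed
qed

lemma card_block_ends_less:
  assumes "x \<le> num_blocks"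
  shows "card {j\<in>block_ends. block_of j < x} = x"
proof -
  have "card {j\<in>block_ends. block_of j < x} = card (block_of ` {j\<in>block_ends. block_of j < x})"
    by (rule card_image[symmetric]) (rule inj_on_subset[OF inj_on_block_of_ends], auto)
  also have "block_of ` {j\<in>block_ends. block_of j < x} = {b\<in>block_of ` block_ends. b < x}" by auto
  also have "\<dots> = {..<x}" using block_of_ends_image assms by auto
  finally show ?thesis by simp
qed

lemma cw_last_in_second_iff:
  assumes "p \<le> j" "j < N"
  shows "\<not> (\<exists>j'. Suc j \<le> j' \<and> j' < N \<and> cw c j' = cw c j) \<longleftrightarrow> j \<in> block_ends"
proof (cases "Suc j = N")
  case True then show ?thesis using assms unfolding block_ends_def by auto
next
  case False
  then show ?thesis using cw_occurs_later_second[OF assms(1)] assms unfolding block_ends_def by auto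
qed

lemma sinv_pair_canonical_iff:
  "i < j \<and> j < N \<and> cw c j < cw c i \<and> \<not> (\<exists>j'. Suc j \<le> j' \<and> j' < N \<and> cw c j' = cw c j) \<longleftrightarrow>
   i < p \<and> j \<in> block_ends \<and> block_of j < c ! i"
proof
  assume h: "i < j \<and> j < N \<and> cw c j < cw c i \<and> \<not> (\<exists>j'. Suc j \<le> j' \<and> j' < N \<and> cw c j' = cw c j)"
  have jp: "p \<le> j" using cw_mono_first[of i j] h by (meson not_le order.asym)
  have ip: "i < p" using cw_mono_second[of i j] h by (meson not_le order.asym)
  show "i < p \<and> j \<in> block_ends \<and> block_of j < c ! i"
    using ip cw_first_le_second_iff[OF ip jp] cw_last_in_second_iff[OF jp] h by auto
next
  assume h: "i < p \<and> j \<in> block_ends \<and> block_of j < c ! i"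
  then have j: "p \<le> j" "j < N" unfolding block_ends_def by auto
  then show "i < j \<and> j < N \<and> cw c j < cw c i \<and> \<not> (\<exists>j'. Suc j \<le> j' \<and> j' < N \<and> cw c j' = cw c j)"
    using h cw_first_le_second_iff[of i j] cw_last_in_second_iff[OF j] by auto
qed

lemma sinv_canonical_word: "sinv (canonical_word c) = sum_list c"
proof -
  have "{(i, j). i < j \<and> j < length (canonical_word c) \<and> canonical_word c ! j < canonical_word c ! i
           \<and> canonical_word c ! j \<notin> set (drop (Suc j) (canonical_word c))}
      = Sigma {..<p} (\<lambda>i. {j\<in>block_ends. block_of j < c ! i})"
  proof (rule set_eqI)
    fix x :: "nat \<times> nat"
    obtain i j where x: "x = (i, j)" by (cases x)
    show "x \<in> {(i, j). i < j \<and> j < length (canonical_word c) \<and> canonical_word c ! j < canonical_word c ! i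
           \<and> canonical_word c ! j \<notin> set (drop (Suc j) (canonical_word c))} \<longleftrightarrow>
          x \<in> Sigma {..<p} (\<lambda>i. {j\<in>block_ends. block_of j < c ! i})"
      using sinv_pair_canonical_iff[of i j] unfolding x
      by (auto simp: in_set_drop_iff nth_canonical_word)
  qed
  then have "sinv (canonical_word c) = (\<Sum>i<p. card {j\<in>block_ends. block_of j < c ! i})"
    unfolding sinv_def by (simp add: card_SigmaI block_ends_def)
  also have "\<dots> = (\<Sum>i<p. c ! i)"
    using code_bound max_code_le
    by (intro sum.cong refl card_block_ends_less) (meson le_trans lessThan_iff)
  also have "\<dots> = sum_list c"
    using c unfolding incr_lists_iff_nth by (simp add: sum_list_sum_nth atLeast0LessThan)
  finally show ?thesis .
qed

lemma set_drop_image: "set (drop k w) = (!) w ` {k..<length w}"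
proof (rule set_eqI)
  fix x
  show "x \<in> set (drop k w) \<longleftrightarrow> x \<in> (!) w ` {k..<length w}"
    unfolding in_set_drop_iff image_iff atLeastLessThan_iff by fastforce
qed

lemma card_second_less_canonical:
  assumes ip: "i < p"
  shows "card {v\<in>set (drop p (canonical_word c)). v < canonical_word c ! i} = c ! i"
proof -
  define f where "f b = b * P + (p + 1)" for b
  have "set (drop p (canonical_word c)) = (cw c) ` {p..<N}"
    unfolding set_drop_image by (auto simp: nth_canonical_word image_iff)
  also have "\<dots> = f ` block_of ` {p..<N}" unfolding f_def by (auto simp: cw_second image_iff)
  also have "\<dots> = f ` {..<num_blocks}" using block_of_image by simp
  finally have s: "set (drop p (canonical_word c)) = f ` {..<num_blocks}" .
  have lt: "f b < cw c i \<longleftrightarrow> b < c ! i" for b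
  proof -
    have "b * P + (p + 1) < c ! i * P + tiebreak c i \<longleftrightarrow> b < c ! i \<or> (b = c ! i \<and> p + 1 < tiebreak c i)"
      by (rule mult_add_less_iff) (use tiebreak_less[OF ip] in auto)
    then show ?thesis unfolding f_def cw_first[OF ip] using tiebreak_le[OF ip, of c] by auto
  qed
  have "{v\<in>set (drop p (canonical_word c)). v < canonical_word c ! i} =
      f ` {b\<in>{..<num_blocks}. b < c ! i}"
    unfolding s using lt ip by (auto simp: nth_canonical_word)
  moreover have "inj f"
  proof (rule injI)
    fix x y assume "f x = f y"
    then show "x = y" using mult_add_eq_iff[of "p + 1" "p + 2" "p + 1" x y] unfolding f_def by simp
  qed
  ultimately have "card {v\<in>set (drop p (canonical_word c)). v < canonical_word c ! i} =
      card {b\<in>{..<num_blocks}. b < c ! i}"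
    by (simp add: card_image inj_on_subset)
  also have "{b\<in>{..<num_blocks}. b < c ! i} = {..<c ! i}"
    using code_bound[OF ip] max_code_le by auto
  finally show ?thesis by simp
qed

end

lemma rank_second_mono: "x \<le> y \<Longrightarrow> rank_second z x \<le> rank_second z y"
  unfolding rank_second_def by (intro card_mono) auto

lemma rank_second_strict:
  assumes "x \<in> set (drop p z)" "x < y"
  shows "Suc (rank_second z x) \<le> rank_second z y"
proof -
  have "insert x {v\<in>set (drop p z). v < x} \<subseteq> {v\<in>set (drop p z). v < y}" using assms by auto
  then have "card (insert x {v\<in>set (drop p z). v < x}) \<le> rank_second z y"
    unfolding rank_second_def by (intro card_mono) auto
  then show ?thesis unfolding rank_second_def by simp
qed

lemma nth_code_of: "i < p \<Longrightarrow> code_of z ! i = rank_second z (z ! i)"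
  unfolding code_of_def rank_second_def by simp

context
  fixes z assumes z: "z \<in> class_words"
begin

lemma length_z: "length z = N" using z unfolding class_words_def by simp

lemma z_mono_first: "i \<le> j \<Longrightarrow> j < p \<Longrightarrow> z ! i \<le> z ! j"
  using z unfolding class_words_def sorted_slice_def by auto

lemma z_mono_second: "p \<le> i \<Longrightarrow> i \<le> j \<Longrightarrow> j < N \<Longrightarrow> z ! i \<le> z ! j"
  using z unfolding class_words_def sorted_slice_def by auto

lemma z_WDes_iff: "1 \<le> k \<Longrightarrow> k < N \<Longrightarrow> k \<in> E \<longleftrightarrow> (\<forall>j. k \<le> j \<longrightarrow> j < N \<longrightarrow> z ! j \<noteq> z ! (k - 1))"
  using z length_z unfolding class_words_def WDes_def in_set_drop_iff by auto

lemma in_second_iff: "v \<in> set (drop p z) \<longleftrightarrow> (\<exists>j. p \<le> j \<and> j < N \<and> z ! j = v)"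
  unfolding in_set_drop_iff length_z ..

lemma nth_in_second: "p \<le> j \<Longrightarrow> j < N \<Longrightarrow> z ! j \<in> set (drop p z)" using in_second_iff by auto

lemma z_neq_Suc_second:
  assumes "p \<le> t" "Suc t < N"
  shows "z ! t \<noteq> z ! Suc t \<longleftrightarrow> Suc t \<in> E"
proof -
  have "sorted_slice z p (length z)" using z length_z unfolding class_words_def by simp
  then have "z ! t \<in> set (drop (Suc t) z) \<longleftrightarrow> z ! t = z ! Suc t"
    using nth_in_drop_Suc_iff_sorted_slice assms length_z by simp
  then show ?thesis
    using Suc_in_WDes_iff[of t z] z assms length_z unfolding class_words_def by auto
qed

lemma rank_second_first: "rank_second z (z ! p) = 0"
proof -
  have "\<not> v < z ! p" if "v \<in> set (drop p z)" for v
    using that z_mono_second[of p] unfolding in_second_iff by (fastforce simp: not_less)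
  then show ?thesis unfolding rank_second_def by auto
qed

lemma rank_second_Suc:
  assumes j: "p \<le> j" "Suc j < N"
  shows "rank_second z (z ! Suc j) = rank_second z (z ! j) + (if Suc j \<in> E then 1 else 0)"
proof (cases "Suc j \<in> E")
  case False
  then show ?thesis using z_neq_Suc_second[OF j] by simp
next
  case True
  then have less: "z ! j < z ! Suc j"
    using z_neq_Suc_second[OF j] z_mono_second[of j "Suc j"] j by (simp add: order_less_le)
  have "v \<le> z ! j" if v: "v \<in> set (drop p z)" "v < z ! Suc j" for v
  proof -
    obtain j' where j': "p \<le> j'" "j' < N" "z ! j' = v" using v(1) in_second_iff by auto
    then show ?thesis using z_mono_second[of "Suc j" j'] z_mono_second[of j' j] v(2) j
      by (cases "j' \<le> j") auto
  qed
  then have "{v\<in>set (drop p z). v < z ! Suc j} = insert (z ! j) {v\<in>set (drop p z). v < z ! j}"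
    using less nth_in_second[of j] j by fastforce
  then show ?thesis using True unfolding rank_second_def by simp
qed

lemma rank_second_block_of: "p \<le> j \<Longrightarrow> j < N \<Longrightarrow> rank_second z (z ! j) = block_of j"
proof (induction j rule: nat_induct_at_least)
  case base
  then show ?case using rank_second_first block_of_le by simp
next
  case (Suc j)
  then show ?case using rank_second_Suc[of j] block_of_Suc[of j] by simp
qed

lemma card_second_values: "card (set (drop p z)) = num_blocks"
proof -
  have N1: "p \<le> N - 1" "N - 1 < N" using n_pos by auto
  let ?m = "z ! (N - 1)"
  have "set (drop p z) = insert ?m {v\<in>set (drop p z). v < ?m}"
  proof (rule set_eqI, rule iffI)
    fix v assume v: "v \<in> set (drop p z)"
    then obtain j where "p \<le> j" "j < N" "z ! j = v" using in_second_iff by auto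
    then have "v \<le> ?m" using z_mono_second[of j "N - 1"] by simp
    then show "v \<in> insert ?m {v\<in>set (drop p z). v < ?m}" using v by auto
  next
    fix v assume "v \<in> insert ?m {v\<in>set (drop p z). v < ?m}"
    then show "v \<in> set (drop p z)" using nth_in_second[OF N1] by auto
  qed
  then have "card (set (drop p z)) = card (insert ?m {v\<in>set (drop p z). v < ?m})"
    by (rule arg_cong)
  also have "\<dots> = Suc (rank_second z ?m)"
    unfolding rank_second_def by (rule card_insert_disjoint) auto
  finally show ?thesis using rank_second_block_of[OF N1] block_of_last num_blocks_pos by simp
qed

lemma code_of_in_incr_lists: "code_of z \<in> incr_lists p max_code"
proof -
  have len: "length (code_of z) = p" unfolding code_of_def by simp
  have srt: "code_of z ! i \<le> code_of z ! j" if "i \<le> j" "j < p" for i j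
    using that rank_second_mono[OF z_mono_first[OF that]] by (simp add: nth_code_of)
  have bnd: "code_of z ! i \<le> max_code" if ip: "i < p" for i
  proof (cases "p \<in> E")
    case True
    have "rank_second z (z ! i) \<le> card (set (drop p z))"
      unfolding rank_second_def by (intro card_mono) auto
    then show ?thesis
      using card_second_values max_code_eq True num_blocks_pos ip by (simp add: nth_code_of)
  next
    case False
    have p1: "1 \<le> p" "p < N" using p_pos n_pos by auto
    obtain j where j: "p \<le> j" "j < N" "z ! j = z ! (p - 1)" using z_WDes_iff[OF p1] False by auto
    have yin: "z ! (p - 1) \<in> set (drop p z)" using nth_in_second[OF j(1,2)] j by simp
    have "z ! i \<le> z ! (p - 1)" using z_mono_first[of i "p - 1"] ip by simp
    then have "{v\<in>set (drop p z). v < z ! i} \<subseteq> set (drop p z) - {z ! (p - 1)}" by auto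
    then have "rank_second z (z ! i) \<le> card (set (drop p z) - {z ! (p - 1)})"
      unfolding rank_second_def by (intro card_mono) auto
    also have "\<dots> = num_blocks - 1" using card_second_values yin by simp
    finally show ?thesis using max_code_eq False ip by (simp add: nth_code_of)
  qed
  show ?thesis unfolding incr_lists_iff_nth using len srt bnd by blast
qed

lemma z_neq_Suc_first:
  assumes "Suc t < p"
  shows "z ! t \<noteq> z ! Suc t \<longleftrightarrow> (Suc t \<in> E \<or> code_of z ! t < code_of z ! Suc t)"
proof -
  have t: "t < p" using assms by simp
  have le: "z ! t \<le> z ! Suc t" using z_mono_first[of t "Suc t"] assms by simp
  show ?thesis
  proof
    assume ne: "z ! t \<noteq> z ! Suc t"
    show "Suc t \<in> E \<or> code_of z ! t < code_of z ! Suc t"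
    proof (cases "Suc t \<in> E")
      case True then show ?thesis by simp
    next
      case nE: False
      obtain j where j: "Suc t \<le> j" "j < N" "z ! j = z ! t"
        using z_WDes_iff[of "Suc t"] nE assms by auto
      have jp: "p \<le> j"
      proof (rule ccontr)
        assume "\<not> p \<le> j"
        then have "z ! Suc t \<le> z ! j" using z_mono_first[of "Suc t" j] j by simp
        then show False using j le ne by simp
      qed
      have "z ! t \<in> set (drop p z)" using nth_in_second[OF jp j(2)] j by simp
      then have "Suc (rank_second z (z ! t)) \<le> rank_second z (z ! Suc t)"
        using rank_second_strict le ne by simp
      then show ?thesis using t assms by (simp add: nth_code_of)
    qed
  next
    assume "Suc t \<in> E \<or> code_of z ! t < code_of z ! Suc t"
    then show "z ! t \<noteq> z ! Suc t"
    proof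
      assume "Suc t \<in> E"
      then show ?thesis using z_WDes_iff[of "Suc t"] assms by auto
    next
      assume "code_of z ! t < code_of z ! Suc t"
      then show ?thesis using t assms by (auto simp: nth_code_of)
    qed
  qed
qed

lemma not_private_if_in_second:
  assumes i: "i < p" and zi: "z ! i \<in> set (drop p z)"
  shows "\<not> is_private (code_of z) i"
proof
  assume "is_private (code_of z) i"
  then obtain d where d: "d \<in> E" "i < d" "d \<le> p" "code_of z ! (d - 1) = code_of z ! i"
    unfolding is_private_def by blast
  have "z ! (d - 1) \<notin> set (drop p z)"
    using z_WDes_iff[of d] d n_pos unfolding in_second_iff by auto
  moreover have "z ! i \<le> z ! (d - 1)" using z_mono_first[of i "d - 1"] d by simp
  ultimately have "z ! i < z ! (d - 1)" using zi by (cases "z ! i = z ! (d - 1)") auto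
  then have "Suc (rank_second z (z ! i)) \<le> rank_second z (z ! (d - 1))"
    using rank_second_strict zi by simp
  then show False using d i by (simp add: nth_code_of)
qed

lemma private_if_not_in_second:
  assumes i: "i < p" and zi: "z ! i \<notin> set (drop p z)"
  shows "is_private (code_of z) i"
proof -
  let ?J = "{j. i \<le> j \<and> j < p \<and> z ! j = z ! i}"
  define d where "d = Max ?J"
  have "d \<in> ?J" unfolding d_def using i by (intro Max_in) auto
  then have d: "i \<le> d" "d < p" "z ! d = z ! i" by auto
  have "z ! j \<noteq> z ! d" if "Suc d \<le> j" "j < N" for j
  proof (cases "j < p")
    case True
    have "j \<notin> ?J" using Max_ge[of ?J j] that unfolding d_def by fastforce
    then show ?thesis using True that d by auto
  next
    case False
    then show ?thesis using nth_in_second[of j] that zi d by auto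
  qed
  then have "Suc d \<in> E" using z_WDes_iff[of "Suc d"] d n_pos by auto
  then show ?thesis unfolding is_private_def using d i
    by (intro bexI[of _ "Suc d"]) (auto simp: nth_code_of)
qed

lemma in_second_iff_not_private:
  "i < p \<Longrightarrow> z ! i \<in> set (drop p z) \<longleftrightarrow> \<not> is_private (code_of z) i"
  using not_private_if_in_second private_if_not_in_second by blast

lemma z_first_le_second_iff:
  assumes "i < p" "p \<le> j" "j < N"
  shows "z ! i \<le> z ! j \<longleftrightarrow> code_of z ! i \<le> block_of j"
proof
  assume "z ! i \<le> z ! j"
  then show "code_of z ! i \<le> block_of j"
    using rank_second_mono[of "z ! i" "z ! j" z] rank_second_block_of[OF assms(2,3)] assms
    by (simp add: nth_code_of)
next
  assume h: "code_of z ! i \<le> block_of j"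
  show "z ! i \<le> z ! j"
  proof (rule ccontr)
    assume "\<not> z ! i \<le> z ! j"
    then have "Suc (rank_second z (z ! j)) \<le> rank_second z (z ! i)"
      using rank_second_strict nth_in_second[OF assms(2,3)] by simp
    then show False using h rank_second_block_of[OF assms(2,3)] assms by (simp add: nth_code_of)
  qed
qed

lemma z_second_le_first_iff:
  assumes "i < p" "p \<le> j" "j < N"
  shows "z ! j \<le> z ! i \<longleftrightarrow>
    block_of j < code_of z ! i \<or> (block_of j = code_of z ! i \<and> z ! i \<in> set (drop p z))"
proof -
  have yj: "z ! j \<in> set (drop p z)" using nth_in_second[OF assms(2,3)] .
  have r: "rank_second z (z ! j) = block_of j" "code_of z ! i = rank_second z (z ! i)"
    using rank_second_block_of[OF assms(2,3)] nth_code_of[OF assms(1)] by auto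
  have eq: "z ! j = z ! i \<longleftrightarrow> (block_of j = code_of z ! i \<and> z ! i \<in> set (drop p z))"
  proof
    assume "z ! j = z ! i" then show "block_of j = code_of z ! i \<and> z ! i \<in> set (drop p z)"
      using r yj by simp
  next
    assume h: "block_of j = code_of z ! i \<and> z ! i \<in> set (drop p z)"
    show "z ! j = z ! i"
    proof (rule ccontr)
      assume "z ! j \<noteq> z ! i"
      then consider "z ! j < z ! i" | "z ! i < z ! j" by linarith
      then show False
      proof cases
        case 1 then show False using rank_second_strict[OF yj] r h by fastforce
      next
        case 2 then show False using rank_second_strict[of "z ! i" z "z ! j"] r h by simp
      qed
    qed
  qed
  have "z ! j < z ! i \<longleftrightarrow> block_of j < code_of z ! i" using z_first_le_second_iff[OF assms] by auto
  then show ?thesis using eq by auto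
qed

lemma same_pattern_canonical_code_of: "same_pattern z (canonical_word (code_of z))"
proof -
  let ?c = "code_of z" and ?u = "canonical_word (code_of z)"
  have c: "?c \<in> incr_lists p max_code" by (rule code_of_in_incr_lists)
  have zs: "sorted_slice z 0 p" "sorted_slice z p N" using z unfolding class_words_def by auto
  have us: "sorted_slice ?u 0 p" "sorted_slice ?u p N"
    using canonical_sorted_first[OF c] canonical_sorted_second[OF c] by auto
  have key: "z ! a \<le> z ! b \<longleftrightarrow> ?u ! a \<le> ?u ! b" if ab: "a < N" "b < N" for a b
  proof (cases "a < p"; cases "b < p")
    assume "a < p" "b < p"
    show ?thesis
      by (rule sorted_slice_le_iff_same_steps[OF zs(1) us(1)])
        (use z_neq_Suc_first cw_neq_Suc_first[OF c] \<open>a < p\<close> \<open>b < p\<close> in \<open>auto simp: nth_canonical_word\<close>)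
  next
    assume "\<not> a < p" "\<not> b < p"
    show ?thesis
      by (rule sorted_slice_le_iff_same_steps[OF zs(2) us(2)])
        (use z_neq_Suc_second cw_neq_Suc_second[OF c] ab \<open>\<not> a < p\<close> \<open>\<not> b < p\<close>
          in \<open>auto simp: nth_canonical_word\<close>)
  next
    assume "a < p" "\<not> b < p"
    then show ?thesis
      using z_first_le_second_iff[of a b] cw_first_le_second_iff[OF c, of a b] ab
      by (simp add: nth_canonical_word)
  next
    assume "\<not> a < p" "b < p"
    then show ?thesis
      using z_second_le_first_iff[of b a] cw_second_le_first_iff[OF c, of b a]
        in_second_iff_not_private[of b] ab
      by (simp add: nth_canonical_word)
  qed
  show ?thesis unfolding same_pattern_def using key length_z by simp
qed

end

lemma code_of_pack_canonical:
  assumes "c \<in> incr_lists p max_code"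
  shows "code_of (pack (canonical_word c)) = c"
proof (rule nth_equalityI)
  show "length (code_of (pack (canonical_word c))) = length c"
    using assms unfolding code_of_def incr_lists_iff_nth by simp
  fix i assume "i < length (code_of (pack (canonical_word c)))"
  then have ip: "i < p" unfolding code_of_def by simp
  have sp: "same_pattern (canonical_word c) (pack (canonical_word c))" by (rule same_pattern_pack)
  have iN: "i < N" using ip by simp
  let ?A = "{j. p \<le> j \<and> j < N \<and> canonical_word c ! j < canonical_word c ! i}"
  have A2: "?A = {j. p \<le> j \<and> j < N \<and> pack (canonical_word c) ! j < pack (canonical_word c) ! i}"
    using same_pattern_nth_less[OF sp] iN by auto
  have e1: "{v\<in>set (drop p (canonical_word c)). v < canonical_word c ! i} = (!) (canonical_word c) ` ?A"
    by (fastforce simp: in_set_drop_iff image_iff)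
  have e2: "{v\<in>set (drop p (pack (canonical_word c))). v < pack (canonical_word c) ! i} =
      (!) (pack (canonical_word c)) ` ?A"
    unfolding A2 by (fastforce simp: in_set_drop_iff image_iff)
  have "card ((!) (canonical_word c) ` ?A) = card ((!) (pack (canonical_word c)) ` ?A)"
    by (rule card_image_same_pattern[OF sp]) auto
  then show "code_of (pack (canonical_word c)) ! i = c ! i"
    using card_second_less_canonical[OF assms ip] e1 e2 ip unfolding code_of_def by simp
qed

lemma pack_canonical_in_class_words:
  assumes "c \<in> incr_lists p max_code"
  shows "pack (canonical_word c) \<in> class_words"
proof -
  have sp: "same_pattern (canonical_word c) (pack (canonical_word c))" by (rule same_pattern_pack)
  have "WDes (pack (canonical_word c)) = E"
    using WDes_same_pattern[OF sp] WDes_canonical_word[OF assms] by simp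
  moreover have "sorted_slice (pack (canonical_word c)) 0 p" "sorted_slice (pack (canonical_word c)) p N"
    using sorted_slice_same_pattern[OF sp]
      canonical_sorted_first[OF assms] canonical_sorted_second[OF assms]
    by auto
  ultimately show ?thesis unfolding class_words_def using packed_pack by simp
qed

lemma bij_betw_pack_canonical:
  "bij_betw (\<lambda>c. pack (canonical_word c)) (incr_lists p max_code) class_words"
proof (rule bij_betw_byWitness[where f' = code_of])
  show "\<forall>c\<in>incr_lists p max_code. code_of (pack (canonical_word c)) = c"
    using code_of_pack_canonical by blast
  show "\<forall>z\<in>class_words. pack (canonical_word (code_of z)) = z"
  proof
    fix z assume z: "z \<in> class_words"
    have "pack z = pack (canonical_word (code_of z))"
      by (rule pack_eq_if_same_pattern[OF same_pattern_canonical_code_of[OF z]])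
    moreover have "pack z = z" using z unfolding class_words_def by (simp add: pack_packed)
    ultimately show "pack (canonical_word (code_of z)) = z" by simp
  qed
  show "(\<lambda>c. pack (canonical_word c)) ` incr_lists p max_code \<subseteq> class_words"
    using pack_canonical_in_class_words by blast
  show "code_of ` class_words \<subseteq> incr_lists p max_code" using code_of_in_incr_lists by blast
qed

lemma sinv_pack_canonical: "c \<in> incr_lists p max_code \<Longrightarrow> sinv (pack (canonical_word c)) = sum_list c"
  using sinv_same_pattern[OF same_pattern_pack, of "canonical_word c"] sinv_canonical_word by simp

lemma class_words_gf: "(\<Sum>z\<in>class_words. (q::'a::comm_semiring_1) ^ sinv z) = incr_lists_gf q p max_code"
proof -
  have "(\<Sum>z\<in>class_words. q ^ sinv z) = (\<Sum>c\<in>incr_lists p max_code. q ^ sinv (pack (canonical_word c)))"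
    using sum.reindex_bij_betw[OF bij_betw_pack_canonical, of "\<lambda>z. q ^ sinv z"] by simp
  also have "\<dots> = (\<Sum>c\<in>incr_lists p max_code. q ^ sum_list c)"
    by (rule sum.cong) (auto simp: sinv_pack_canonical)
  finally show ?thesis unfolding incr_lists_gf_def .
qed

end

section \<open>The coefficients of the product\<close>

lemma finite_comp_leq: "finite {K. comp_leq K J}"
  by (rule finite_subset[OF _ finite_comps[of "sum_list J"]]) (auto simp: comp_leq_def)

lemma sum_Psi_apply:
  assumes "finite A"
  shows "(\<Sum>K\<in>A. f K * Psi K J) = (if J \<in> A then f J else (0::'a::comm_semiring_1))"
proof -
  have "(\<Sum>K\<in>A. f K * Psi K J) = (\<Sum>K\<in>A. if K = J then f J else 0)"
    unfolding Psi_def by (rule sum.cong) auto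
  then show ?thesis using assms by (simp add: sum.delta')
qed

lemma Lq_apply: "Lq J q I = (if comp_leq I J then q ^ st I J else 0)"
  unfolding Lq_def by (simp add: sum_Psi_apply[OF finite_comp_leq])

lemma supp_Lq: "(q::'a::idom) \<noteq> 0 \<Longrightarrow> supp (Lq J q) = {K. comp_leq K J}"
  unfolding supp_def Lq_apply by auto

lemma pack_eq_word_of_comp_iff:
  assumes K: "is_comp K" and len: "sum_list K = length y"
  shows "pack y = word_of_comp K \<longleftrightarrow> sorted y \<and> Des K = changes y"
proof -
  have sp: "same_pattern y (pack y)" by (rule same_pattern_pack)
  have woc: "word_of_comp K = word_of_des (length y) (Des K)"
    using word_of_comp_eq_word_of_des[OF K] len by simp
  show ?thesis
  proof
    assume "pack y = word_of_comp K"
    then show "sorted y \<and> Des K = changes y"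
      using sorted_same_pattern[OF sp] changes_same_pattern[OF sp] sorted_word_of_comp[OF K]
        changes_word_of_des[OF Des_subset[OF K]] woc len by simp
  next
    assume "sorted y \<and> Des K = changes y"
    then show "pack y = word_of_comp K"
      using packed_sorted_eq_word_of_des[OF packed_pack] sorted_same_pattern[OF sp]
        changes_same_pattern[OF sp] woc by simp
  qed
qed

lemma comp_leq_pack_eq_word_of_comp_iff:
  assumes J: "is_comp J" "0 < sum_list J" and len: "length y = sum_list J"
  shows "comp_leq K J \<and> pack y = word_of_comp K \<longleftrightarrow>
         sorted y \<and> Des J \<subseteq> changes y \<and> K = comp_from_des (sum_list J) (changes y)"
proof -
  have "changes y \<subseteq> {1..<sum_list J}" using changes_subset[of y] len by simp
  note cfd = comp_from_des_props[OF J(2) this]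
  show ?thesis
  proof
    assume K: "comp_leq K J \<and> pack y = word_of_comp K"
    then have "is_comp K" "sum_list K = length y" "Des J \<subseteq> Des K"
      using len unfolding comp_leq_def by auto
    then show "sorted y \<and> Des J \<subseteq> changes y \<and> K = comp_from_des (sum_list J) (changes y)"
      using pack_eq_word_of_comp_iff K cfd comp_eq_by_Des[of K] len by auto
  next
    assume "sorted y \<and> Des J \<subseteq> changes y \<and> K = comp_from_des (sum_list J) (changes y)"
    then show "comp_leq K J \<and> pack y = word_of_comp K"
      using pack_eq_word_of_comp_iff[of K y] cfd J len unfolding comp_leq_def by auto
  qed
qed

lemma sum_comp_leq_pack_eq:
  assumes J: "is_comp J" "0 < sum_list J" and len: "length y = sum_list J"
  shows "(\<Sum>K\<in>{K. comp_leq K J}. if pack y = word_of_comp K then g K else 0) =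
         (if sorted y \<and> Des J \<subseteq> changes y then g (comp_from_des (sum_list J) (changes y)) else 0)"
proof -
  have "{K\<in>{K. comp_leq K J}. pack y = word_of_comp K} =
        (if sorted y \<and> Des J \<subseteq> changes y then {comp_from_des (sum_list J) (changes y)} else {})"
    using comp_leq_pack_eq_word_of_comp_iff[OF J len] by auto
  then show ?thesis by (simp add: sum.inter_filter[OF finite_comp_leq, symmetric])
qed

lemma sigma_Lq:
  assumes "(q::'a::idom) \<noteq> 0"
  shows "sigma (Lq J q) z = (\<Sum>K\<in>{K. comp_leq K J \<and> word_of_comp K = z}. q ^ st K J)"
  unfolding sigma_def supp_Lq[OF assms] by (rule sum.cong) (auto simp: Lq_apply)

lemma sigma_Lq_word_of_comp:
  assumes "(q::'a::idom) \<noteq> 0" "comp_leq K0 J"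
  shows "sigma (Lq J q) (word_of_comp K0) = q ^ st K0 J"
proof -
  have "{K. comp_leq K J \<and> word_of_comp K = word_of_comp K0} = {K0}"
    using assms(2) word_of_comp_inj unfolding comp_leq_def by blast
  then show ?thesis unfolding sigma_Lq[OF assms(1)] by simp
qed

lemma supp_sigma_Lq:
  assumes "(q::'a::idom) \<noteq> 0"
  shows "supp (sigma (Lq J q)) = word_of_comp ` {K. comp_leq K J}"
proof (rule set_eqI, rule iffI)
  fix z assume "z \<in> supp (sigma (Lq J q))"
  then have "sigma (Lq J q) z \<noteq> 0" unfolding supp_def by simp
  then have "{K. comp_leq K J \<and> word_of_comp K = z} \<noteq> {}"
    unfolding sigma_Lq[OF assms] by (metis sum.empty)
  then show "z \<in> word_of_comp ` {K. comp_leq K J}" by auto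
next
  fix z assume "z \<in> word_of_comp ` {K. comp_leq K J}"
  then obtain K where "comp_leq K J" "z = word_of_comp K" by auto
  then show "z \<in> supp (sigma (Lq J q))"
    unfolding supp_def using sigma_Lq_word_of_comp[OF assms] assms by simp
qed

lemma st_singleton: "st K [p] = 0"
  unfolding st_def by (simp add: Des_def)

lemma Mstar_coeff_word_of_comp:
  assumes K: "is_comp K" and K': "is_comp K'"
  shows "Mstar_coeff (q::'a::field) (word_of_comp K) (word_of_comp K') z =
    (if packed z \<and> length z = sum_list K + sum_list K' \<and> pack (take (sum_list K) z) = word_of_comp K
        \<and> pack (drop (sum_list K) z) = word_of_comp K' then q ^ sinv z else 0)"
  unfolding Mstar_coeff_def
  using sinv_sorted_eq_0[OF sorted_word_of_comp[OF K]] sinv_sorted_eq_0[OF sorted_word_of_comp[OF K']]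
    length_word_of_comp[OF K] length_word_of_comp[OF K'] by (simp add: power_int_of_nat)

lemma inj_on_word_of_comp: "inj_on word_of_comp {K. comp_leq K J}"
  by (rule inj_onI) (use word_of_comp_inj in \<open>auto simp: comp_leq_def\<close>)

lemma wq_star_sigma_Lq_apply:
  fixes q :: "'a::field"
  assumes q: "q \<noteq> 0"
  shows "wq_star q (sigma (Lq J1 q)) (sigma (Lq J2 q)) z =
    (if packed z \<and> length z = sum_list J1 + sum_list J2 then
      (\<Sum>K | comp_leq K J1. if pack (take (sum_list J1) z) = word_of_comp K then q ^ st K J1 else 0) *
      (\<Sum>K | comp_leq K J2. if pack (drop (sum_list J1) z) = word_of_comp K then q ^ st K J2 else 0) *
      q ^ sinv z
     else 0)"
proof -
  have "wq_star q (sigma (Lq J1 q)) (sigma (Lq J2 q)) z =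
    (\<Sum>K | comp_leq K J1. \<Sum>K' | comp_leq K' J2.
       q ^ st K J1 * q ^ st K' J2 * Mstar_coeff q (word_of_comp K) (word_of_comp K') z)"
    unfolding wq_star_def supp_sigma_Lq[OF q]
    by (simp add: sum.reindex inj_on_word_of_comp sigma_Lq_word_of_comp[OF q])
  also have "\<dots> = (if packed z \<and> length z = sum_list J1 + sum_list J2 then
      (\<Sum>K | comp_leq K J1. \<Sum>K' | comp_leq K' J2.
        (if pack (take (sum_list J1) z) = word_of_comp K then q ^ st K J1 else 0) *
        (if pack (drop (sum_list J1) z) = word_of_comp K' then q ^ st K' J2 else 0) * q ^ sinv z)
      else 0)"
    by (auto simp: Mstar_coeff_word_of_comp comp_leq_def intro!: sum.cong)
  finally show ?thesis by (simp only: sum_product, simp only: sum_distrib_right)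
qed

text \<open>
  The coefficient of \<open>M\<^sub>z\<close> in \<open>\<sigma>(L\<^sub>p) \<star>\<^sub>q \<sigma>(L\<^sub>I)\<close>: the prefix of \<open>z\<close> must pack to the word of
  some \<open>K \<preceq> (p)\<close>, and the suffix to the word of the unique \<open>K' \<preceq> I\<close> whose descent set is
  the set of value changes of the suffix.
\<close>

definition prod_support :: "nat \<Rightarrow> nat list \<Rightarrow> nat list \<Rightarrow> bool" where
  "prod_support p I z \<longleftrightarrow> packed z \<and> length z = p + sum_list I \<and> sorted (take p z) \<and> sorted (drop p z)
     \<and> Des I \<subseteq> changes (drop p z)"

definition prod_coeff :: "'a::comm_semiring_1 \<Rightarrow> nat \<Rightarrow> nat list \<Rightarrow> nat list \<Rightarrow> 'a" where
  "prod_coeff q p I z = (if prod_support p I z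
     then q ^ st (comp_from_des (sum_list I) (changes (drop p z))) I * q ^ sinv z else 0)"

lemma wq_star_sigma_Lq:
  fixes q :: "'a::field"
  assumes q: "q \<noteq> 0" and p: "0 < p" and I: "is_comp I" "I \<noteq> []"
  shows "wq_star q (sigma (Lq [p] q)) (sigma (Lq I q)) z = prod_coeff q p I z"
proof (cases "packed z \<and> length z = p + sum_list I")
  case False
  then show ?thesis
    using wq_star_sigma_Lq_apply[OF q, of "[p]" I z] by (auto simp: prod_coeff_def prod_support_def)
next
  case True
  have n: "0 < sum_list I" using I by (cases I) auto
  have "(\<Sum>K | comp_leq K [p]. if pack (take p z) = word_of_comp K then q ^ st K [p] else 0) =
      (if sorted (take p z) then 1 else 0)"
    using sum_comp_leq_pack_eq[of "[p]" "take p z" "\<lambda>K. q ^ st K [p]"] p True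
    by (simp add: st_singleton Des_def)
  moreover have "(\<Sum>K | comp_leq K I. if pack (drop p z) = word_of_comp K then q ^ st K I else 0) =
      (if sorted (drop p z) \<and> Des I \<subseteq> changes (drop p z)
       then q ^ st (comp_from_des (sum_list I) (changes (drop p z))) I else 0)"
    using sum_comp_leq_pack_eq[OF I(1) n, of "drop p z" "\<lambda>K. q ^ st K I"] True by simp
  ultimately show ?thesis
    using wq_star_sigma_Lq_apply[OF q, of "[p]" I z] True
    by (simp add: prod_coeff_def prod_support_def)
qed

lemma sym_star_Lq_apply:
  fixes q :: "'a::field"
  assumes "q \<noteq> 0" "0 < p" "is_comp I" "I \<noteq> []"
  shows "sym_star q (Lq [p] q) (Lq I q) J = (\<Sum>z | prod_support p I z \<and> WC z = J. prod_coeff q p I z)"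
proof -
  have W: "wq_star q (sigma (Lq [p] q)) (sigma (Lq I q)) = prod_coeff q p I"
    using wq_star_sigma_Lq[OF assms] by blast
  have fin: "finite {z. prod_support p I z \<and> WC z = J}"
    by (rule finite_subset[OF _ finite_packed_length[of "p + sum_list I"]]) (auto simp: prod_support_def)
  show ?thesis
    unfolding sym_star_def zeta_def W
    by (rule sum.mono_neutral_left[OF fin]) (auto simp: supp_def prod_coeff_def prod_support_def)
qed

lemma Des_tri:
  assumes "I \<noteq> []"
  shows "Des (tri p I) = (+) p ` Des I"
proof -
  obtain a K where I: "I = a # K" using assms by (cases I) auto
  show ?thesis unfolding tri_def I by (simp add: Des_Cons image_image add.assoc)
qed

lemma is_comp_tri:
  assumes "0 < p" "is_comp I" "I \<noteq> []"
  shows "is_comp (tri p I) \<and> sum_list (tri p I) = p + sum_list I"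
  using assms by (cases I) (auto simp: tri_def)

definition st_set :: "nat set \<Rightarrow> nat set \<Rightarrow> nat" where
  "st_set A B = card {(a, b). a \<in> A \<and> b \<in> B \<and> b \<le> a}"

lemma st_eq_st_set: "st K J = st_set (Des K) (Des J)" unfolding st_def st_set_def by simp

lemma st_set_translate: "st_set ((+) p ` A) ((+) p ` B) = st_set A B"
proof -
  have "{(a, b). a \<in> (+) p ` A \<and> b \<in> (+) p ` B \<and> b \<le> a} =
      (\<lambda>(a, b). (p + a, p + b)) ` {(a, b). a \<in> A \<and> b \<in> B \<and> b \<le> a}"
    by force
  then show ?thesis unfolding st_set_def by (simp add: card_image inj_on_def)
qed

lemma st_set_restrict:
  assumes "\<forall>b\<in>B. p < b"
  shows "st_set {a\<in>A. p < a} B = st_set A B"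
proof -
  have "{(a, b). a \<in> {a\<in>A. p < a} \<and> b \<in> B \<and> b \<le> a} = {(a, b). a \<in> A \<and> b \<in> B \<and> b \<le> a}"
    using assms by fastforce
  then show ?thesis unfolding st_set_def by simp
qed

lemma changes_drop_eq_WDes:
  assumes lz: "length z = p + n" and so: "sorted (drop p z)"
  shows "(+) p ` changes (drop p z) = {d\<in>WDes z. p < d}"
proof (rule set_eqI)
  fix d
  show "d \<in> (+) p ` changes (drop p z) \<longleftrightarrow> d \<in> {d\<in>WDes z. p < d}"
  proof (cases "p < d \<and> d < p + n")
    case False
    then show ?thesis using changes_subset[of "drop p z"] WDes_subset[of z] lz by auto
  next
    case True
    then obtain t where d: "d = Suc (p + t)" "Suc t < n"
      by (metis add_Suc_right less_add_Suc2 less_iff_Suc_add nat_add_left_cancel_less)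
    have "z ! (p + t) \<in> set (drop (Suc (p + t)) z) \<longleftrightarrow> z ! (p + t) = z ! Suc (p + t)"
      by (rule nth_in_drop_Suc_iff_sorted_slice) (use so lz d in \<open>auto simp: sorted_drop_iff_slice\<close>)
    then have "Suc t \<in> changes (drop p z) \<longleftrightarrow> d \<in> WDes z"
      using d lz Suc_in_WDes_iff[of "p + t" z] unfolding changes_def by auto
    then show ?thesis using d by (auto simp: image_iff)
  qed
qed

lemma WC_sorted_drop:
  assumes "0 < length z" "p \<le> length z" "sorted (drop p z)" "WC z = J"
  shows "is_comp J" "sum_list J = length z" "Des J = WDes z"
    and "(+) p ` changes (drop p z) = {d\<in>Des J. p < d}"
  using assms WC_eq_iff[of z J] changes_drop_eq_WDes[of z p "length z - p"] by auto

lemma Des_subset_shift_iff: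
  fixes p :: nat
  assumes "(+) p ` C = {d\<in>D. p < d}" and "0 \<notin> A"
  shows "A \<subseteq> C \<longleftrightarrow> (+) p ` A \<subseteq> D"
proof
  assume "A \<subseteq> C"
  then show "(+) p ` A \<subseteq> D" using assms(1) by blast
next
  assume A: "(+) p ` A \<subseteq> D"
  show "A \<subseteq> C"
  proof
    fix e assume "e \<in> A"
    moreover have "0 < e" using \<open>e \<in> A\<close> assms(2) by (cases e) auto
    ultimately have "p + e \<in> (+) p ` C" unfolding assms(1) using A by (simp add: image_subset_iff)
    then show "e \<in> C" by auto
  qed
qed

lemma comp_leq_tri_iff_changes:
  assumes "0 < p" "is_comp I" "I \<noteq> []"
    and J: "is_comp J" "sum_list J = p + sum_list I"
    and shift: "(+) p ` changes (drop p z) = {d\<in>Des J. p < d}"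
  shows "comp_leq J (tri p I) \<longleftrightarrow> Des I \<subseteq> changes (drop p z)"
proof -
  have "0 \<notin> Des I" using Des_subset[OF assms(2)] by auto
  then have "Des I \<subseteq> changes (drop p z) \<longleftrightarrow> (+) p ` Des I \<subseteq> Des J"
    by (rule Des_subset_shift_iff[OF shift])
  moreover have "comp_leq J (tri p I) \<longleftrightarrow> Des (tri p I) \<subseteq> Des J"
    using is_comp_tri[OF assms(1-3)] J unfolding comp_leq_def by simp
  ultimately show ?thesis by (simp add: Des_tri[OF assms(3)])
qed

lemma comp_leq_tri_if_prod_support:
  assumes "0 < p" "is_comp I" "I \<noteq> []" "prod_support p I z" "WC z = J"
  shows "comp_leq J (tri p I)"
proof -
  have "0 < length z" "p \<le> length z" using assms(1,4) by (auto simp: prod_support_def)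
  note WC = WC_sorted_drop[OF this _ assms(5)]
  show ?thesis
    using comp_leq_tri_iff_changes[OF assms(1-3)] WC assms(4) by (auto simp: prod_support_def)
qed

lemma shuffle_class_tri:
  assumes "0 < p" "is_comp I" "I \<noteq> []" "comp_leq J (tri p I)"
  shows "shuffle_class p (sum_list I) (Des J)"
proof -
  have "0 < sum_list I" using assms(2,3) by (cases I) auto
  moreover have "is_comp J" "sum_list J = p + sum_list I"
    using assms(4) is_comp_tri[OF assms(1-3)] unfolding comp_leq_def by auto
  ultimately show ?thesis using assms(1) Des_subset[of J] by unfold_locales auto
qed

lemma prod_support_WC_iff_class_words:
  assumes p: "0 < p" and I: "is_comp I" "I \<noteq> []" and J: "comp_leq J (tri p I)"
  shows "prod_support p I z \<and> WC z = J \<longleftrightarrow> z \<in> shuffle_class.class_words p (sum_list I) (Des J)"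
proof -
  have Jc: "is_comp J" "sum_list J = p + sum_list I"
    using J is_comp_tri[OF p I] unfolding comp_leq_def by auto
  interpret shuffle_class p "sum_list I" "Des J" by (rule shuffle_class_tri[OF p I J])
  show ?thesis
  proof
    assume z: "prod_support p I z \<and> WC z = J"
    then have len: "length z = N" "0 < length z" "p \<le> length z"
      using p by (auto simp: prod_support_def)
    have "Des J = WDes z" using WC_sorted_drop(3)[OF len(2,3)] z by (simp add: prod_support_def)
    then show "z \<in> class_words"
      using z len unfolding class_words_def prod_support_def
      by (simp add: sorted_take_iff_slice sorted_drop_iff_slice)
  next
    assume z: "z \<in> class_words"
    then have len: "length z = N" "0 < length z" "p \<le> length z"
      using p by (auto simp: class_words_def)
    have z1: "packed z" "WDes z = Des J" "sorted (take p z)" "sorted (drop p z)"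
      using z len
      unfolding class_words_def by (simp_all add: sorted_take_iff_slice sorted_drop_iff_slice)
    have WC: "WC z = J" using WC_eq_iff[OF len(2)] Jc z1(2) len(1) by simp
    have "(+) p ` changes (drop p z) = {d\<in>Des J. p < d}"
      by (rule WC_sorted_drop(4)[OF len(2,3) z1(4) WC])
    then have "Des I \<subseteq> changes (drop p z)"
      using comp_leq_tri_iff_changes[OF p I Jc] J by blast
    then show "prod_support p I z \<and> WC z = J" using z1 WC len(1) by (simp add: prod_support_def)
  qed
qed

lemma prod_coeff_WC:
  assumes p: "0 < p" and I: "is_comp I" "I \<noteq> []" and z: "prod_support p I z" "WC z = J"
  shows "prod_coeff q p I z = q ^ st J (tri p I) * q ^ sinv z"
proof -
  let ?n = "sum_list I" and ?C = "changes (drop p z)"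
  have n: "0 < ?n" using I by (cases I) auto
  have len: "0 < length z" "p \<le> length z" using p z by (auto simp: prod_support_def)
  have shift: "(+) p ` ?C = {d\<in>Des J. p < d}"
    by (rule WC_sorted_drop(4)[OF len _ z(2)]) (use z in \<open>simp add: prod_support_def\<close>)
  have "?C \<subseteq> {1..<?n}" using changes_subset[of "drop p z"] z by (simp add: prod_support_def)
  then have "Des (comp_from_des ?n ?C) = ?C" using comp_from_des_props[OF n] by simp
  then have "st (comp_from_des ?n ?C) I = st_set ?C (Des I)" by (simp add: st_eq_st_set)
  also have "\<dots> = st_set {a\<in>Des J. p < a} ((+) p ` Des I)"
    by (simp flip: shift add: st_set_translate)
  also have "\<dots> = st_set (Des J) ((+) p ` Des I)"
    by (rule st_set_restrict) (use Des_subset[OF I(1)] in fastforce)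
  also have "\<dots> = st_set (Des J) (Des (tri p I))" by (simp add: Des_tri[OF I(2)])
  also have "\<dots> = st J (tri p I)" by (simp add: st_eq_st_set)
  finally show ?thesis using z by (simp add: prod_coeff_def)
qed

lemma sum_prod_coeff_WC:
  assumes "0 < p" "is_comp I" "I \<noteq> []" "comp_leq J (tri p I)"
  shows "(\<Sum>z | prod_support p I z \<and> WC z = J. prod_coeff q p I z) =
    q ^ st J (tri p I) * incr_lists_gf q p (mK p J)"
proof -
  interpret shuffle_class p "sum_list I" "Des J" by (rule shuffle_class_tri[OF assms])
  have "(\<Sum>z | prod_support p I z \<and> WC z = J. prod_coeff q p I z) =
      (\<Sum>z\<in>class_words. q ^ st J (tri p I) * q ^ sinv z)"
    using prod_support_WC_iff_class_words[OF assms] prod_coeff_WC[OF assms(1-3)]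
    by (intro sum.cong) auto
  also have "\<dots> = q ^ st J (tri p I) * incr_lists_gf q p max_code"
    by (simp add: class_words_gf[symmetric] sum_distrib_left)
  finally show ?thesis by (simp add: max_code_def mK_def)
qed

theorem mainTheorem19:
  fixes p :: nat and I :: "nat list"
  assumes "0 < p" and "is_comp I" and "I \<noteq> []"
  shows "sym_star (qvar :: 'k::field_char_0 poly fract) (Lq [p] qvar) (Lq I qvar) =
         (\<lambda>J. \<Sum>K\<in>{K. comp_leq K (tri p I)}.
                qvar ^ st K (tri p I) * qbinom (mK p K + p) p qvar * Psi K J)"
proof (rule ext)
  fix J
  let ?q = "qvar :: 'k poly fract" and ?T = "tri p I"
  have "sym_star ?q (Lq [p] ?q) (Lq I ?q) J =
      (\<Sum>z | prod_support p I z \<and> WC z = J. prod_coeff ?q p I z)"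
    by (rule sym_star_Lq_apply[OF qvar_nonzero assms])
  also have "\<dots> = (if comp_leq J ?T then ?q ^ st J ?T * qbinom (mK p J + p) p ?q else 0)"
  proof (cases "comp_leq J ?T")
    case True
    then show ?thesis
      using sum_prod_coeff_WC[OF assms True, of ?q] incr_lists_gf_eq_qbinom[of ?q, OF qint_qvar_nonzero] by simp
  next
    case False
    then have "{z. prod_support p I z \<and> WC z = J} = {}" using comp_leq_tri_if_prod_support[OF assms] by blast
    then show ?thesis using False by (simp only: sum.empty if_False)
  qed
  also have "\<dots> = (\<Sum>K\<in>{K. comp_leq K ?T}. ?q ^ st K ?T * qbinom (mK p K + p) p ?q * Psi K J)"
    by (simp add: sum_Psi_apply[OF finite_comp_leq])
  finally show "sym_star ?q (Lq [p] ?q) (Lq I ?q) J =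
      (\<Sum>K\<in>{K. comp_leq K ?T}. ?q ^ st K ?T * qbinom (mK p K + p) p ?q * Psi K J)" .
qed

end
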